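(* Let $\{X^{(k)}\}_{k\ge 0}$ be an irreducible Markov chain on a measurable state space $(\mathcal X,\mathcal B)$ with transition kernel $P$ and stationary distribution $\pi$. Let $R_0\in\mathcal B$ (the "large set") and suppose the chain satisfies the generalized drift condition on $R_0$: there are a measurable $f:\mathcal X\to[0,\infty)$, $0<\lambda<1$ and $0\le b<\infty$ such that $$\mathbb E\big(f(X^{(1)})\mid X^{(0)}=x\big)\le \lambda f(x)+b\qquad\forall x\in R_0,$$ and at least one of (C1), (C1') holds: (C1) $R_0=\{x\in\mathcal X: f(x)\le d_0\}$ for some $d_0>0$; (C1') $P=P_1P_2\cdots P_I$ for a fixed integer $I\ge1$ and kernels $P_i$ that are each reversible with respect to $\pi$ (i.e. $P(x,dy)=\int P_1(x,dx_1)P_2(x_1,dx_2)\cdots P_I(x_{I-1},dy)$), and $$\mathbb E\big(f(\tilde X^{(1)})\mid \tilde X^{(0)}=x\big)\le \mathbb E\big(f(X^{(1)})\mid X^{(0)}=x\big)\qquad \forall x\in R_0,$$ where $\{\tilde X^{(k)}\}$ is the Markov chain on $R_0$ with kernel $\tilde P=\tilde P_1\cdots\tilde P_I$, with $\tilde P_i(x,dy):=P_i(x,dy)$ for $x,y\in R_0$, $y\neq x$, and $\tilde P_i(x,\{x\}):=1-P_i(x,R_0\setminus\{x\})$ for $x\in R_0$. Suppose further that for some $d>2b/(1-\lambda)$, with $R:=\{x\in\mathcal X:f(x)\le d\}$, there exist $\epsilon>0$ and a probability measure $Q$ on $\mathcal X$ with $P(x,\cdot)\ge\epsilon Q(\cdot)$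 for all $x\in R$. Let the chain start from an initial distribution $\nu$ with $\nu(R_0)=1$. Set $\alpha^{-1}=\frac{1+2b+\lambda d}{1+d}$ and $\Lambda=1+2(\lambda d+b)$. Then for every $0<r<1$ and every positive integer $k$ such that $rk$ is an integer, $$\|\mathcal L(X^{(k)})-\pi\|_{\mathrm{TV}}\le (1-\epsilon Q(R_0))^{rk}+\frac{(\alpha\Lambda)^{rk}\Big[1+\mathbb E_\nu[f]+\frac{b}{1-\lambda}\Big]-\alpha^{rk}}{\alpha^k-\alpha^{rk}}+k\,\pi(R_0^c)+\sum_{i=1}^k P^i(\nu,R_0^c).$$
   Context: $\|\mu_1-\mu_2\|_{\mathrm{TV}}=\sup_{B\in\mathcal B}|\mu_1(B)-\mu_2(B)|$; $\mathcal L(X^{(k)})$ is the law of $X^{(k)}$; $P^i$ is the $i$-step kernel and $P^i(\nu,B)=\int\nu(dx)P^i(x,B)$; $\mathbb E_\nu[f]=\int f\,d\nu$; $R_0^c=\mathcal X\setminus R_0$. Note $d>2b/(1-\lambda)$ implies $\alpha>1$. *)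

theory Defs
  imports "HOL-Probability.Probability"
begin

definition kstep :: "('a \<Rightarrow> 'a measure) \<Rightarrow> nat \<Rightarrow> 'a measure \<Rightarrow> 'a measure" where
  "kstep P n \<nu> = ((\<lambda>\<mu>. \<mu> \<bind> P) ^^ n) \<nu>"

definition tv_dist :: "'a measure \<Rightarrow> 'a measure \<Rightarrow> 'a measure \<Rightarrow> real" where
  "tv_dist M \<mu>1 \<mu>2 = (SUP B\<in>sets M. \<bar>measure \<mu>1 B - measure \<mu>2 B\<bar>)"

definition irreducible_kernel :: "'a measure \<Rightarrow> ('a \<Rightarrow> 'a measure) \<Rightarrow> bool" where
  "irreducible_kernel M P \<longleftrightarrow>
     (\<exists>\<phi>. sets \<phi> = sets M \<and> sigma_finite_measure \<phi> \<and> emeasure \<phi> (space M) > 0 \<and>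
        (\<forall>A\<in>sets M. emeasure \<phi> A > 0 \<longrightarrow>
           (\<forall>x\<in>space M. \<exists>n>0. emeasure (kstep P n (return M x)) A > 0)))"

definition reversible_kernel :: "'a measure \<Rightarrow> 'a measure \<Rightarrow> ('a \<Rightarrow> 'a measure) \<Rightarrow> bool" where
  "reversible_kernel M \<pi> K \<longleftrightarrow>
     (\<forall>A\<in>sets M. \<forall>B\<in>sets M.
        (\<integral>\<^sup>+x\<in>A. emeasure (K x) B \<partial>\<pi>) = (\<integral>\<^sup>+x\<in>B. emeasure (K x) A \<partial>\<pi>))"

fun kcomp :: "'a measure \<Rightarrow> ('a \<Rightarrow> 'a measure) list \<Rightarrow> 'a \<Rightarrow> 'a measure" where
  "kcomp M [] = return M"
| "kcomp M (K # Ks) = (\<lambda>x. K x \<bind> kcomp M Ks)"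

text \<open>The truncated kernel on R0: moves of K from x \<in> R0 to y \<in> R0, y \<noteq> x are kept,
  all remaining mass is put on x.  (Outside R0 it is irrelevant; we let it stay put.)\<close>
definition trunc_kernel :: "'a measure \<Rightarrow> 'a set \<Rightarrow> ('a \<Rightarrow> 'a measure) \<Rightarrow> 'a \<Rightarrow> 'a measure" where
  "trunc_kernel M R0 K x =
     (if x \<in> R0 then
        measure_of (space M) (sets M)
          (\<lambda>A. emeasure (K x) (A \<inter> (R0 - {x})) +
               (if x \<in> A then 1 - emeasure (K x) (R0 - {x}) else 0))
      else return M x)"

end

theory Submission
  imports Defs
begin

text \<open>
  Run a copy \<open>X\<close> of the chain from \<open>\<nu>\<close> and a copy \<open>Y\<close> from \<open>\<pi>\<close>, coupled as follows: whenever
  both lie in the small set \<open>R = {f \<le> d}\<close>, toss an \<open>\<epsilon>\<close>-coin and on success move both to a common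
  point drawn from \<open>Q\<close>; otherwise move them independently (using the residual kernel
  \<open>(P - \<epsilon>Q)/(1 - \<epsilon>)\<close> on \<open>R \<times> R\<close>). Then \<open>\<parallel>\<L>(X\<^sub>k) - \<pi>\<parallel> \<le> \<P>(not coupled by time k)\<close>, and
  failure to couple means that either there were at least \<open>rk\<close> joint visits to \<open>R \<times> R\<close>, each
  failing with probability \<open>1 - \<epsilon>\<close>, or there were fewer, or one of the chains left \<open>R\<^sub>0\<close>.
  The first event is controlled by the supermartingale \<open>(1 - \<epsilon>)\<^sup>-\<^sup>j\<close>, the last by a union bound,
  and the middle one by the supermartingale \<open>\<alpha>\<^sup>n (\<alpha>\<Lambda>)\<^sup>-\<^sup>j (1 + f(X\<^sub>n) + f(Y\<^sub>n))\<close>, where \<open>j\<close>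
  counts joint visits: the drift condition makes \<open>1 + f(x) + f(y)\<close> shrink by \<open>\<alpha>\<close> off \<open>R \<times> R\<close>
  and grow by at most \<open>\<Lambda>\<close> on it. Its initial value involves \<open>\<integral>\<^sub>R\<^sub>0 f d\<pi> \<le> b/(1 - \<lambda>)\<close>, which
  both (C1) and (C1') provide: under (C1') the truncated chain lives on \<open>R\<^sub>0\<close>, leaves \<open>\<pi>|\<^sub>R\<^sub>0\<close>
  invariant by reversibility, and satisfies the drift condition everywhere.
\<close>

lemma kstep_0 [simp]: "kstep K 0 \<mu> = \<mu>"
  by (simp add: kstep_def)

lemma kstep_Suc: "kstep K (Suc n) \<mu> = kstep K n \<mu> \<bind> K"
  by (simp add: kstep_def)

lemma kstep_in_prob_algebra:
  assumes K: "K \<in> N \<rightarrow>\<^sub>M prob_algebra N" and \<mu>: "\<mu> \<in> space (prob_algebra N)"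
  shows "kstep K n \<mu> \<in> space (prob_algebra N)"
proof (induction n)
  case 0 then show ?case using \<mu> by simp
next
  case (Suc n)
  show ?case unfolding kstep_Suc space_prob_algebra
    using sets_bind'[OF Suc K] prob_space_bind'[OF Suc K] by simp
qed

lemma kstep_stationary: "\<mu> \<bind> K = \<mu> \<Longrightarrow> kstep K n \<mu> = \<mu>"
  by (induction n) (simp_all add: kstep_Suc)

lemma kstep_return_kernel:
  assumes K: "K \<in> M \<rightarrow>\<^sub>M prob_algebra M"
  shows "(\<lambda>x. kstep K n (return M x)) \<in> M \<rightarrow>\<^sub>M prob_algebra M"
proof (induction n)
  case (Suc n)
  then show ?case using measurable_bind_prob_space[OF Suc K] by (simp add: kstep_Suc)
qed simp

lemma kstep_eq_bind_return:
  assumes K: "K \<in> M \<rightarrow>\<^sub>M prob_algebra M" and \<mu>: "sets \<mu> = sets M"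
  shows "kstep K n \<mu> = \<mu> \<bind> (\<lambda>x. kstep K n (return M x))"
proof (induction n)
  case 0
  show ?case using bind_return''[OF \<mu>] by simp
next
  case (Suc n)
  have "kstep K (Suc n) \<mu> = (\<mu> \<bind> (\<lambda>x. kstep K n (return M x))) \<bind> K"
    by (simp add: kstep_Suc Suc)
  also have "\<dots> = \<mu> \<bind> (\<lambda>x. kstep K n (return M x) \<bind> K)"
  proof (rule bind_assoc)
    show "(\<lambda>x. kstep K n (return M x)) \<in> \<mu> \<rightarrow>\<^sub>M subprob_algebra M"
      using measurable_prob_algebraD[OF kstep_return_kernel[OF K]]
      by (simp add: measurable_cong_sets[OF \<mu> refl])
  qed (rule measurable_prob_algebraD[OF K])
  finally show ?case by (simp add: kstep_Suc)
qed

lemma AE_in_if_null_compl: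
  assumes "sets N = sets M" "R \<in> sets M" "emeasure N (space M - R) = 0"
  shows "AE y in N. y \<in> R"
proof (rule AE_I')
  show "space M - R \<in> null_sets N" using assms by (auto simp: null_sets_def)
  show "{y \<in> space N. y \<notin> R} \<subseteq> space M - R" using sets_eq_imp_space_eq[OF assms(1)] by auto
qed

lemma countably_additive_restrict_plus_point:
  assumes N: "sets N = sets M" and B: "B \<in> sets M"
  shows "countably_additive (sets M) (\<lambda>A. emeasure N (A \<inter> B) + (if x \<in> A then c else 0))"
proof (rule countably_additiveI)
  fix F :: "nat \<Rightarrow> 'a set"
  assume F: "range F \<subseteq> sets M" "disjoint_family F" "(\<Union>i. F i) \<in> sets M"
  have d2: "disjoint_family (\<lambda>i. F i \<inter> B)" using F(2) by (auto simp: disjoint_family_on_def)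
  have r2: "range (\<lambda>i. F i \<inter> B) \<subseteq> sets N" using F(1) B N by auto
  have s1: "(\<Sum>i. emeasure N (F i \<inter> B)) = emeasure N ((\<Union>i. F i) \<inter> B)"
    using suminf_emeasure[OF r2 d2] by simp
  have s2: "(\<Sum>i. (if x \<in> F i then c else 0)) = (if x \<in> (\<Union>i. F i) then c else 0)"
  proof -
    have "(\<Sum>i. (if x \<in> F i then c else 0)) = (\<Sum>i. c * indicator (F i) x)"
      by (intro suminf_cong) (simp split: split_indicator)
    also have "\<dots> = c * (\<Sum>i. indicator (F i) x)" by (rule ennreal_suminf_cmult)
    also have "\<dots> = c * indicator (\<Union>i. F i) x" by (simp add: suminf_indicator[OF F(2)])
    finally show ?thesis by (simp split: split_indicator)
  qed
  show "(\<Sum>i. emeasure N (F i \<inter> B) + (if x \<in> F i then c else 0)) =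
        emeasure N ((\<Union>i. F i) \<inter> B) + (if x \<in> (\<Union>i. F i) then c else 0)"
    by (subst suminf_add[symmetric]) (auto simp: s1 s2)
qed

locale truncation =
  fixes M :: "'a measure" and R0 :: "'a set" and K :: "'a \<Rightarrow> 'a measure"
  assumes K_kernel: "K \<in> M \<rightarrow>\<^sub>M prob_algebra M"
    and R0_meas: "R0 \<in> sets M"
    and singleton_meas: "\<forall>x\<in>space M. {x} \<in> sets M"
begin

abbreviation "T \<equiv> trunc_kernel M R0 K"

lemma R0_subset: "R0 \<subseteq> space M"
  using R0_meas sets.sets_into_space by auto

lemma K_sets: "x \<in> space M \<Longrightarrow> sets (K x) = sets M"
  and K_prob: "x \<in> space M \<Longrightarrow> prob_space (K x)"
  using measurable_space[OF K_kernel] by (simp_all add: space_prob_algebra)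

lemma measure_K_measurable: "A \<in> sets M \<Longrightarrow> (\<lambda>x. measure (K x) A) \<in> borel_measurable M"
  using measurable_compose[OF K_kernel measurable_measure_prob_algebra] by simp

lemma emeasure_K_measurable: "A \<in> sets M \<Longrightarrow> (\<lambda>x. emeasure (K x) A) \<in> borel_measurable M"
  using measurable_compose[OF measurable_prob_algebraD[OF K_kernel] measurable_emeasure_subprob_algebra]
  by simp

lemma emeasure_T_raw:
  assumes x: "x \<in> R0" and A: "A \<in> sets M"
  shows "emeasure (T x) A = emeasure (K x) (A \<inter> (R0 - {x}))
           + (if x \<in> A then 1 - emeasure (K x) (R0 - {x}) else 0)"
proof -
  have xs: "x \<in> space M" using x R0_subset by auto
  have B: "R0 - {x} \<in> sets M" using R0_meas singleton_meas xs by auto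
  have "positive (sets M) (\<lambda>A. emeasure (K x) (A \<inter> (R0 - {x}))
           + (if x \<in> A then 1 - emeasure (K x) (R0 - {x}) else 0))"
    by (simp add: positive_def)
  with countably_additive_restrict_plus_point[OF K_sets[OF xs] B] x A show ?thesis
    by (simp add: trunc_kernel_def emeasure_measure_of_sigma[OF sets.sigma_algebra_axioms])
qed

lemma emeasure_T:
  assumes x: "x \<in> R0" and A: "A \<in> sets M"
  shows "emeasure (T x) A = ennreal (measure (K x) (A \<inter> R0) + indicator A x * (1 - measure (K x) R0))"
proof -
  have xs: "x \<in> space M" using x R0_subset by auto
  interpret Kx: prob_space "K x" using K_prob[OF xs] .
  have sK: "sets (K x) = sets M" using K_sets[OF xs] .
  have B: "R0 - {x} \<in> sets M" "{x} \<in> sets M" using R0_meas singleton_meas xs by auto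
  have le1: "measure (K x) (R0 - {x}) \<le> 1" by simp
  have one_minus: "1 - ennreal (measure (K x) (R0 - {x})) = ennreal (1 - measure (K x) (R0 - {x}))"
    by (metis ennreal_1 ennreal_minus measure_nonneg)
  show ?thesis
  proof (cases "x \<in> A")
    case True
    have "A \<inter> R0 = (A \<inter> (R0 - {x})) \<union> {x}" using True x by auto
    then have m1: "measure (K x) (A \<inter> R0) = measure (K x) (A \<inter> (R0 - {x})) + measure (K x) {x}"
      using B A by (subst Kx.finite_measure_Union[symmetric]) (auto simp: sK)
    have "R0 = (R0 - {x}) \<union> {x}" using x by auto
    then have m2: "measure (K x) R0 = measure (K x) (R0 - {x}) + measure (K x) {x}"
      using B by (subst Kx.finite_measure_Union[symmetric]) (auto simp: sK)
    have "emeasure (T x) A = ennreal (measure (K x) (A \<inter> (R0 - {x}))) + ennreal (1 - measure (K x) (R0 - {x}))"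
      using True A B by (simp add: emeasure_T_raw[OF x A] Kx.emeasure_eq_measure sK one_minus)
    also have "\<dots> = ennreal (measure (K x) (A \<inter> (R0 - {x})) + (1 - measure (K x) (R0 - {x})))"
      using le1 by (intro ennreal_plus[symmetric]) auto
    also have "measure (K x) (A \<inter> (R0 - {x})) + (1 - measure (K x) (R0 - {x}))
        = measure (K x) (A \<inter> R0) + indicator A x * (1 - measure (K x) R0)"
      using True m1 m2 by simp
    finally show ?thesis .
  next
    case False
    then have "A \<inter> (R0 - {x}) = A \<inter> R0" by auto
    then have "emeasure (T x) A = emeasure (K x) (A \<inter> R0)"
      using False by (simp add: emeasure_T_raw[OF x A])
    then show ?thesis using False by (simp add: Kx.emeasure_eq_measure)
  qed
qed

lemma sets_T [simp]: "sets (T x) = sets M"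
  by (simp add: trunc_kernel_def)

lemma prob_space_T: assumes x: "x \<in> space M" shows "prob_space (T x)"
proof (cases "x \<in> R0")
  case True
  have "space M \<inter> R0 = R0" using R0_subset by auto
  then have "emeasure (T x) (space M) = 1"
    using True x by (simp add: emeasure_T[OF True sets.top])
  then show ?thesis by (intro prob_spaceI) (simp add: sets_eq_imp_space_eq[OF sets_T])
next
  case False then show ?thesis using x by (simp add: trunc_kernel_def prob_space_return)
qed

lemma T_kernel: "T \<in> M \<rightarrow>\<^sub>M prob_algebra M"
proof (rule measurable_prob_algebra_generated[where \<Omega>="space M" and G="sets M"])
  show "sets M = sigma_sets (space M) (sets M)" by (simp add: sets.sigma_sets_eq)
  show "Int_stable (sets M)" by (auto simp: Int_stable_def)
  show "sets M \<subseteq> Pow (space M)" using sets.space_closed by auto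
  show "\<And>a. a \<in> space M \<Longrightarrow> prob_space (T a)" by (rule prob_space_T)
  show "\<And>a. a \<in> space M \<Longrightarrow> sets (T a) = sets M" by simp
  fix A assume A: "A \<in> sets M"
  have "(\<lambda>x. emeasure (T x) A) \<in> borel_measurable M \<longleftrightarrow>
     (\<lambda>x. if x \<in> R0 then ennreal (measure (K x) (A \<inter> R0) + indicator A x * (1 - measure (K x) R0))
          else indicator A x) \<in> borel_measurable M"
  proof (intro measurable_cong)
    fix w assume "w \<in> space M"
    then show "emeasure (T w) A = (if w \<in> R0 then ennreal (measure (K w) (A \<inter> R0)
                 + indicator A w * (1 - measure (K w) R0)) else indicator A w)"
      using emeasure_T[OF _ A, of w] A by (cases "w \<in> R0") (auto simp: trunc_kernel_def)
  qed
  also have "\<dots>"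
    using measure_K_measurable[of "A \<inter> R0"] measure_K_measurable[OF R0_meas] A R0_meas
    by measurable
  finally show "(\<lambda>x. emeasure (T x) A) \<in> borel_measurable M" .
qed

lemma T_confined: "x \<in> R0 \<Longrightarrow> emeasure (T x) (space M - R0) = 0"
  using R0_meas by (simp add: emeasure_T Diff_Int_distrib2)

lemma indicator_times_emeasure_T:
  assumes x: "x \<in> space M" and A: "A \<in> sets M"
  shows "indicator R0 x * emeasure (T x) A
    = emeasure (K x) (A \<inter> R0) * indicator R0 x + ennreal (1 - measure (K x) R0) * indicator (A \<inter> R0) x"
proof (cases "x \<in> R0")
  case True
  interpret Kx: prob_space "K x" using K_prob[OF x] .
  have "emeasure (T x) A = ennreal (measure (K x) (A \<inter> R0)) + ennreal (indicator A x * (1 - measure (K x) R0))"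
    unfolding emeasure_T[OF True A] by (rule ennreal_plus) auto
  then show ?thesis using True by (simp add: Kx.emeasure_eq_measure split: split_indicator)
qed simp

text \<open>Reversibility exchanges the mass \<open>K\<close> moves from \<open>R\<^sub>0\<close> into \<open>A \<inter> R\<^sub>0\<close> with the mass it moves
  from \<open>A \<inter> R\<^sub>0\<close> into \<open>R\<^sub>0\<close>, which the truncation puts back together with the rejected moves.\<close>

lemma T_stationary:
  assumes \<pi>: "sets \<pi> = sets M" and rev: "reversible_kernel M \<pi> K"
  shows "density \<pi> (indicator R0) \<bind> T = density \<pi> (indicator R0)"
proof -
  let ?\<mu> = "density \<pi> (indicator R0)"
  have \<mu>: "sets ?\<mu> = sets M" using \<pi> by simp
  have T\<mu>: "T \<in> ?\<mu> \<rightarrow>\<^sub>M subprob_algebra M"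
    using measurable_prob_algebraD[OF T_kernel] by (simp add: measurable_cong_sets[OF \<mu> refl])
  have ind: "indicator R0 \<in> borel_measurable \<pi>" using R0_meas \<pi> by simp
  have eK: "(\<lambda>x. emeasure (K x) B * indicator C x) \<in> borel_measurable \<pi>"
    if "B \<in> sets M" "C \<in> sets M" for B C
    using emeasure_K_measurable[OF that(1)] that(2) by (simp add: measurable_cong_sets[OF \<pi> refl])
  have rK: "(\<lambda>x. ennreal (1 - measure (K x) R0) * indicator C x) \<in> borel_measurable \<pi>"
    if "C \<in> sets M" for C
    using measure_K_measurable[OF R0_meas] that by (simp add: measurable_cong_sets[OF \<pi> refl])
  show ?thesis
  proof (cases "space M = {}")
    case True
    then have "space ?\<mu> = {}" using \<mu> sets_eq_imp_space_eq by blast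
    then show ?thesis by (metis bind_empty space_empty)
  next
    case False
    then have ne: "space ?\<mu> \<noteq> {}" using sets_eq_imp_space_eq[OF \<mu>] by simp
    show ?thesis
    proof (rule measure_eqI)
      show sets: "sets (?\<mu> \<bind> T) = sets ?\<mu>" using sets_bind[OF _ ne, of T M] \<mu> by simp
      fix A assume "A \<in> sets (?\<mu> \<bind> T)"
      then have A: "A \<in> sets M" using sets \<mu> by simp
      have AR: "A \<inter> R0 \<in> sets M" using A R0_meas by auto
      have "emeasure (?\<mu> \<bind> T) A = (\<integral>\<^sup>+x. emeasure (T x) A \<partial>?\<mu>)"
        by (rule emeasure_bind[OF ne T\<mu> A])
      also have "\<dots> = (\<integral>\<^sup>+x. indicator R0 x * emeasure (T x) A \<partial>\<pi>)"
        using measurable_compose[OF measurable_prob_algebraD[OF T_kernel]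
            measurable_emeasure_subprob_algebra[OF A]]
        by (intro nn_integral_density ind) (simp add: measurable_cong_sets[OF \<pi> refl])
      also have "\<dots> = (\<integral>\<^sup>+x. emeasure (K x) (A \<inter> R0) * indicator R0 x
                        + ennreal (1 - measure (K x) R0) * indicator (A \<inter> R0) x \<partial>\<pi>)"
        using A by (intro nn_integral_cong) (simp add: indicator_times_emeasure_T sets_eq_imp_space_eq[OF \<pi>])
      also have "\<dots> = (\<integral>\<^sup>+x. emeasure (K x) (A \<inter> R0) * indicator R0 x \<partial>\<pi>)
                    + (\<integral>\<^sup>+x. ennreal (1 - measure (K x) R0) * indicator (A \<inter> R0) x \<partial>\<pi>)"
        using AR R0_meas by (intro nn_integral_add eK rK)
      also have "(\<integral>\<^sup>+x. emeasure (K x) (A \<inter> R0) * indicator R0 x \<partial>\<pi>)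
          = (\<integral>\<^sup>+x. emeasure (K x) R0 * indicator (A \<inter> R0) x \<partial>\<pi>)"
        using rev R0_meas AR unfolding reversible_kernel_def by auto
      also have "(\<integral>\<^sup>+x. emeasure (K x) R0 * indicator (A \<inter> R0) x \<partial>\<pi>)
                    + (\<integral>\<^sup>+x. ennreal (1 - measure (K x) R0) * indicator (A \<inter> R0) x \<partial>\<pi>)
               = (\<integral>\<^sup>+x. emeasure (K x) R0 * indicator (A \<inter> R0) x
                    + ennreal (1 - measure (K x) R0) * indicator (A \<inter> R0) x \<partial>\<pi>)"
        using AR R0_meas by (intro nn_integral_add[symmetric] eK rK)
      also have "\<dots> = (\<integral>\<^sup>+x. indicator (A \<inter> R0) x \<partial>\<pi>)"
      proof (rule nn_integral_cong)
        fix x assume "x \<in> space \<pi>"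
        then interpret Kx: prob_space "K x" using K_prob sets_eq_imp_space_eq[OF \<pi>] by simp
        have "emeasure (K x) R0 + ennreal (1 - measure (K x) R0) = 1"
          by (simp add: Kx.emeasure_eq_measure ennreal_plus[symmetric] del: ennreal_plus)
        then show "emeasure (K x) R0 * indicator (A \<inter> R0) x
            + ennreal (1 - measure (K x) R0) * indicator (A \<inter> R0) x = indicator (A \<inter> R0) x"
          by (simp add: distrib_right[symmetric])
      qed
      also have "\<dots> = (\<integral>\<^sup>+x. indicator R0 x * indicator A x \<partial>\<pi>)"
        by (rule nn_integral_cong) (simp split: split_indicator)
      also have "\<dots> = emeasure ?\<mu> A"
        by (rule emeasure_density[OF ind, symmetric]) (simp add: A \<pi>)
      finally show "emeasure (?\<mu> \<bind> T) A = emeasure ?\<mu> A" .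
    qed
  qed
qed

end

lemma kcomp_confined_stationary:
  assumes R0: "R0 \<in> sets M" and \<mu>: "sets \<mu> = sets M"
    and Ks: "\<forall>K\<in>set Ks. K \<in> M \<rightarrow>\<^sub>M prob_algebra M \<and> (\<forall>x\<in>R0. emeasure (K x) (space M - R0) = 0)
                        \<and> \<mu> \<bind> K = \<mu>"
  shows "kcomp M Ks \<in> M \<rightarrow>\<^sub>M prob_algebra M \<and> (\<forall>x\<in>R0. emeasure (kcomp M Ks x) (space M - R0) = 0)
           \<and> \<mu> \<bind> kcomp M Ks = \<mu>"
  using Ks
proof (induction Ks)
  case Nil
  show ?case using R0 bind_return''[OF \<mu>] by (auto simp: emeasure_return)
next
  case (Cons K Ks)
  then have IH: "kcomp M Ks \<in> M \<rightarrow>\<^sub>M prob_algebra M" "\<forall>x\<in>R0. emeasure (kcomp M Ks x) (space M - R0) = 0"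
      "\<mu> \<bind> kcomp M Ks = \<mu>" by auto
  have K: "K \<in> M \<rightarrow>\<^sub>M prob_algebra M" "\<forall>x\<in>R0. emeasure (K x) (space M - R0) = 0" "\<mu> \<bind> K = \<mu>"
    using Cons.prems by auto
  have confined: "emeasure (K x \<bind> kcomp M Ks) (space M - R0) = 0" if x: "x \<in> R0" for x
  proof -
    have Kx: "K x \<in> space (prob_algebra M)"
      using measurable_space[OF K(1)] x R0 sets.sets_into_space by auto
    have AE: "AE y in K x. y \<in> R0"
      using Kx K(2) x R0 by (intro AE_in_if_null_compl) (auto simp: space_prob_algebra)
    have "emeasure (K x \<bind> kcomp M Ks) (space M - R0)
        = (\<integral>\<^sup>+y. emeasure (kcomp M Ks y) (space M - R0) \<partial>K x)"
      using R0 by (intro emeasure_bind_prob_algebra[OF Kx IH(1)]) auto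
    also have "\<dots> = (\<integral>\<^sup>+y. 0 \<partial>K x)"
      using AE by (intro nn_integral_cong_AE) (auto elim: eventually_mono simp: IH(2))
    finally show ?thesis by simp
  qed
  have "\<mu> \<bind> (\<lambda>x. K x \<bind> kcomp M Ks) = (\<mu> \<bind> K) \<bind> kcomp M Ks"
  proof (rule bind_assoc[symmetric])
    show "K \<in> \<mu> \<rightarrow>\<^sub>M subprob_algebra M"
      using measurable_prob_algebraD[OF K(1)] by (simp add: measurable_cong_sets[OF \<mu> refl])
  qed (rule measurable_prob_algebraD[OF IH(1)])
  then show ?case
    using measurable_bind_prob_space[OF K(1) IH(1)] confined K(3) IH(3) by simp
qed

locale confined_drift =
  fixes M :: "'a measure" and \<pi> :: "'a measure" and R0 :: "'a set" and f :: "'a \<Rightarrow> real"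
    and lam b :: real and T :: "'a \<Rightarrow> 'a measure"
  assumes T_kernel: "T \<in> M \<rightarrow>\<^sub>M prob_algebra M"
    and T_confined: "\<forall>x\<in>R0. emeasure (T x) (space M - R0) = 0"
    and T_stationary: "density \<pi> (indicator R0) \<bind> T = density \<pi> (indicator R0)"
    and drift: "\<forall>x\<in>R0. (\<integral>\<^sup>+y. ennreal (f y) \<partial>T x) \<le> ennreal (lam * f x + b)"
    and R0_meas: "R0 \<in> sets M"
    and f_meas: "f \<in> borel_measurable M" and f_nonneg: "\<forall>x\<in>space M. 0 \<le> f x"
    and lam: "0 < lam" "lam < 1" and b: "0 \<le> b"
    and pi_prob: "prob_space \<pi>" and pi_sets: "sets \<pi> = sets M"
begin

abbreviation "\<pi>R \<equiv> density \<pi> (indicator R0)"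

abbreviation "Tn n x \<equiv> kstep T n (return M x)"

lemma R0_subset: "R0 \<subseteq> space M"
  using R0_meas sets.sets_into_space by auto

lemma sets_\<pi>R: "sets \<pi>R = sets M"
  using pi_sets by simp

lemma Tn_kernel: "(\<lambda>x. Tn n x) \<in> M \<rightarrow>\<^sub>M prob_algebra M"
  by (rule kstep_return_kernel[OF T_kernel])

lemma Tn_sets: "x \<in> space M \<Longrightarrow> sets (Tn n x) = sets M"
  and Tn_prob: "x \<in> space M \<Longrightarrow> prob_space (Tn n x)"
  using measurable_space[OF Tn_kernel] by (simp_all add: space_prob_algebra)

lemma Inf_le_drift: "\<forall>x\<in>R0. Inf (f ` R0) \<le> lam * f x + b"
proof
  fix x assume x: "x \<in> R0"
  let ?c = "Inf (f ` R0)"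
  have xs: "x \<in> space M" using x R0_subset by auto
  have bdd: "bdd_below (f ` R0)" using f_nonneg R0_subset by (auto intro!: bdd_belowI[of _ 0])
  have Tx: "sets (T x) = sets M" "prob_space (T x)"
    using measurable_space[OF T_kernel xs] by (simp_all add: space_prob_algebra)
  have "ennreal ?c = (\<integral>\<^sup>+y. ennreal ?c \<partial>T x)"
    using prob_space.emeasure_space_1[OF Tx(2)] by simp
  also have "\<dots> \<le> (\<integral>\<^sup>+y. ennreal (f y) \<partial>T x)"
  proof (rule nn_integral_mono_AE)
    show "AE y in T x. ennreal ?c \<le> ennreal (f y)"
      using AE_in_if_null_compl[OF Tx(1) R0_meas] T_confined x
      by (auto elim!: eventually_mono intro!: ennreal_leI cInf_lower bdd)
  qed
  also have "\<dots> \<le> ennreal (lam * f x + b)" using drift x by auto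
  finally show "?c \<le> lam * f x + b"
    using lam b f_nonneg xs by (subst (asm) ennreal_le_iff) auto
qed

lemma Tn_confined_drift:
  assumes x: "x \<in> R0"
  shows "emeasure (Tn n x) (space M - R0) = 0
    \<and> (\<integral>\<^sup>+y. ennreal (f y) \<partial>Tn n x) \<le> ennreal (lam ^ n * f x + b / (1 - lam))"
proof (induction n)
  case 0
  have xs: "x \<in> space M" using x R0_subset by auto
  have "f x \<le> f x + b / (1 - lam)" using b lam by simp
  then show ?case using x xs R0_meas f_meas by (simp add: nn_integral_return emeasure_return ennreal_leI)
next
  case (Suc n)
  have xs: "x \<in> space M" using x R0_subset by auto
  have Tnx: "Tn n x \<in> space (prob_algebra M)" using measurable_space[OF Tn_kernel xs] .
  have sK: "sets (Tn n x) = sets M" and pK: "prob_space (Tn n x)" using Tn_sets Tn_prob xs by auto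
  have AE: "AE y in Tn n x. y \<in> R0" using AE_in_if_null_compl[OF sK R0_meas] Suc by auto
  have "emeasure (Tn (Suc n) x) (space M - R0) = (\<integral>\<^sup>+y. emeasure (T y) (space M - R0) \<partial>Tn n x)"
    unfolding kstep_Suc using R0_meas by (intro emeasure_bind_prob_algebra[OF Tnx T_kernel]) auto
  also have "\<dots> = (\<integral>\<^sup>+y. 0 \<partial>Tn n x)"
    using AE T_confined by (intro nn_integral_cong_AE) (auto elim: eventually_mono)
  finally have confined: "emeasure (Tn (Suc n) x) (space M - R0) = 0" by simp
  have fk: "(\<lambda>y. ennreal (f y)) \<in> borel_measurable M" using f_meas by simp
  have "(\<integral>\<^sup>+y. ennreal (f y) \<partial>Tn (Suc n) x) = (\<integral>\<^sup>+y. (\<integral>\<^sup>+z. ennreal (f z) \<partial>T y) \<partial>Tn n x)"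
    unfolding kstep_Suc
    by (rule nn_integral_bind[OF fk])
      (simp add: measurable_cong_sets[OF sK refl] measurable_prob_algebraD[OF T_kernel])
  also have "\<dots> \<le> (\<integral>\<^sup>+y. ennreal lam * ennreal (f y) + ennreal b \<partial>Tn n x)"
  proof (rule nn_integral_mono_AE)
    show "AE y in Tn n x. (\<integral>\<^sup>+z. ennreal (f z) \<partial>T y) \<le> ennreal lam * ennreal (f y) + ennreal b"
      using AE
    proof eventually_elim
      case (elim y)
      then have "0 \<le> f y" using f_nonneg R0_subset by auto
      then have "ennreal (lam * f y + b) = ennreal lam * ennreal (f y) + ennreal b"
        using lam b by (simp add: ennreal_mult ennreal_plus)
      then show ?case using drift elim by auto
    qed
  qed
  also have "\<dots> = ennreal lam * (\<integral>\<^sup>+y. ennreal (f y) \<partial>Tn n x) + ennreal b"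
    using prob_space.emeasure_space_1[OF pK] fk
    by (subst nn_integral_add) (auto simp: measurable_cong_sets[OF sK refl] nn_integral_cmult)
  also have "\<dots> \<le> ennreal lam * ennreal (lam ^ n * f x + b / (1 - lam)) + ennreal b"
    using Suc by (intro add_mono mult_left_mono) auto
  also have "\<dots> = ennreal (lam ^ Suc n * f x + b / (1 - lam))"
  proof -
    have "0 \<le> f x" "0 \<le> b / (1 - lam)" using f_nonneg xs b lam by auto
    then have "ennreal lam * ennreal (lam ^ n * f x + b / (1 - lam)) + ennreal b
        = ennreal (lam * (lam ^ n * f x + b / (1 - lam)) + b)"
      using lam b by (simp add: ennreal_mult ennreal_plus)
    also have "lam * (lam ^ n * f x + b / (1 - lam)) + b = lam ^ Suc n * f x + b / (1 - lam)"
      using lam by (simp add: field_simps)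
    finally show ?thesis .
  qed
  finally show ?case using confined by simp
qed

lemma indicator_R0_measurable: "indicator R0 \<in> borel_measurable \<pi>"
  using R0_meas pi_sets by simp

lemma AE_\<pi>R_in_R0: "AE x in \<pi>R. x \<in> R0"
  using R0_meas pi_sets by (subst AE_density) (auto split: split_indicator)

lemma emeasure_\<pi>R_space_le_1: "emeasure \<pi>R (space \<pi>R) \<le> 1"
proof -
  have "emeasure \<pi>R (space \<pi>R) = (\<integral>\<^sup>+x. indicator R0 x * indicator (space \<pi>) x \<partial>\<pi>)"
    using sets.top[of \<pi>] by (subst emeasure_density[OF indicator_R0_measurable]) simp_all
  also have "\<dots> \<le> (\<integral>\<^sup>+x. 1 \<partial>\<pi>)" by (rule nn_integral_mono) (simp split: split_indicator)
  also have "\<dots> = 1" using prob_space.emeasure_space_1[OF pi_prob] by simp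
  finally show ?thesis .
qed

text \<open>Stationarity of \<open>\<pi>R\<close> lets us replace \<open>f\<close> by its expectation after \<open>n\<close> steps of \<open>T\<close>;
  truncation at \<open>c\<close> keeps every integral finite so that we may let \<open>n \<rightarrow> \<infinity>\<close>.\<close>

lemma nn_integral_min_le_iterate:
  "(\<integral>\<^sup>+x. ennreal (min (f x) c) \<partial>\<pi>R) \<le> (\<integral>\<^sup>+x. ennreal (min (lam ^ n * max (f x) 0 + b / (1 - lam)) c) \<partial>\<pi>R)"
proof -
  have fm: "(\<lambda>y. ennreal (min (f y) c)) \<in> borel_measurable M" using f_meas by measurable
  have "(\<integral>\<^sup>+x. ennreal (min (f x) c) \<partial>\<pi>R) = (\<integral>\<^sup>+x. ennreal (min (f x) c) \<partial>(\<pi>R \<bind> (\<lambda>x. Tn n x)))"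
    by (simp add: kstep_stationary[OF T_stationary] flip: kstep_eq_bind_return[OF T_kernel sets_\<pi>R])
  also have "\<dots> = (\<integral>\<^sup>+x. (\<integral>\<^sup>+y. ennreal (min (f y) c) \<partial>Tn n x) \<partial>\<pi>R)"
    by (rule nn_integral_bind[OF fm])
      (simp add: measurable_cong_sets[OF sets_\<pi>R refl] measurable_prob_algebraD[OF Tn_kernel])
  also have "\<dots> \<le> (\<integral>\<^sup>+x. ennreal (min (lam ^ n * max (f x) 0 + b / (1 - lam)) c) \<partial>\<pi>R)"
  proof (rule nn_integral_mono_AE)
    show "AE x in \<pi>R. (\<integral>\<^sup>+y. ennreal (min (f y) c) \<partial>Tn n x)
        \<le> ennreal (min (lam ^ n * max (f x) 0 + b / (1 - lam)) c)"
      using AE_\<pi>R_in_R0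
    proof eventually_elim
      case (elim x)
      have xs: "x \<in> space M" using elim R0_subset by auto
      have "(\<integral>\<^sup>+y. ennreal (min (f y) c) \<partial>Tn n x) \<le> (\<integral>\<^sup>+y. ennreal (f y) \<partial>Tn n x)"
        by (rule nn_integral_mono) (simp add: ennreal_leI)
      also have "\<dots> \<le> ennreal (lam ^ n * max (f x) 0 + b / (1 - lam))"
        using Tn_confined_drift[OF elim] f_nonneg xs by auto
      finally have 1: "(\<integral>\<^sup>+y. ennreal (min (f y) c) \<partial>Tn n x)
          \<le> ennreal (lam ^ n * max (f x) 0 + b / (1 - lam))" .
      have "(\<integral>\<^sup>+y. ennreal (min (f y) c) \<partial>Tn n x) \<le> (\<integral>\<^sup>+y. ennreal c \<partial>Tn n x)"
        by (rule nn_integral_mono) (simp add: ennreal_leI)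
      then have 2: "(\<integral>\<^sup>+y. ennreal (min (f y) c) \<partial>Tn n x) \<le> ennreal c"
        using prob_space.emeasure_space_1[OF Tn_prob[OF xs]] by simp
      show ?case using 1 2 by (simp add: min_def)
    qed
  qed
  finally show ?thesis .
qed

lemma nn_integral_min_le:
  assumes c: "0 \<le> c"
  shows "(\<integral>\<^sup>+x. ennreal (min (f x) c) \<partial>\<pi>R) \<le> ennreal (b / (1 - lam))"
proof -
  define g where "g n x = ennreal (min (lam ^ n * max (f x) 0 + b / (1 - lam)) c)" for n x
  have g_meas: "g n \<in> borel_measurable \<pi>R" for n
  proof -
    have "(\<lambda>x. min (lam ^ n * max (f x) 0 + b / (1 - lam)) c) \<in> borel_measurable M"
      using f_meas by (intro borel_measurable_min borel_measurable_add borel_measurable_times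
          borel_measurable_max) auto
    then show ?thesis
      unfolding g_def measurable_cong_sets[OF sets_\<pi>R refl] by (rule measurable_compose) simp
  qed
  have dec: "decseq g"
  proof (rule decseq_SucI, rule le_funI)
    fix n x
    have "lam ^ Suc n * max (f x) 0 \<le> lam ^ n * max (f x) 0"
      using lam by (intro mult_right_mono) (auto simp: power_decreasing)
    then show "g (Suc n) x \<le> g n x" unfolding g_def by (intro ennreal_leI) auto
  qed
  have fin: "(\<integral>\<^sup>+x. g n x \<partial>\<pi>R) < \<infinity>" for n
  proof -
    have "(\<integral>\<^sup>+x. g n x \<partial>\<pi>R) \<le> (\<integral>\<^sup>+x. ennreal c \<partial>\<pi>R)"
      by (rule nn_integral_mono) (simp add: g_def ennreal_leI)
    also have "\<dots> = ennreal c * emeasure \<pi>R (space \<pi>R)" by simp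
    also have "\<dots> \<le> ennreal c * 1" by (intro mult_left_mono emeasure_\<pi>R_space_le_1) simp
    finally show ?thesis by (simp add: le_less_trans)
  qed
  have lim: "(INF n. g n x) \<le> ennreal (b / (1 - lam))" for x
  proof -
    have "(\<lambda>n. lam ^ n * max (f x) 0) \<longlonglongrightarrow> 0"
      using LIMSEQ_power_zero[of lam] lam by (intro tendsto_mult_left_zero) auto
    then have "(\<lambda>n. min (lam ^ n * max (f x) 0 + b / (1 - lam)) c) \<longlonglongrightarrow> min (0 + b / (1 - lam)) c"
      by (intro tendsto_min tendsto_add tendsto_const)
    then have "(\<lambda>n. g n x) \<longlonglongrightarrow> ennreal (min (b / (1 - lam)) c)"
      unfolding g_def by (simp add: tendsto_ennrealI)
    then have "(INF n. g n x) \<le> ennreal (min (b / (1 - lam)) c)"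
      by (rule LIMSEQ_le_const) (auto intro: INF_lower)
    also have "\<dots> \<le> ennreal (b / (1 - lam))" by (intro ennreal_leI) simp
    finally show ?thesis .
  qed
  have "(\<integral>\<^sup>+x. ennreal (min (f x) c) \<partial>\<pi>R) \<le> (INF n. (\<integral>\<^sup>+x. g n x \<partial>\<pi>R))"
    unfolding g_def by (intro INF_greatest nn_integral_min_le_iterate)
  also have "\<dots> = (\<integral>\<^sup>+x. (INF n. g n x) \<partial>\<pi>R)"
    by (rule nn_integral_monotone_convergence_INF_decseq[symmetric, OF dec g_meas fin])
  also have "\<dots> \<le> (\<integral>\<^sup>+x. ennreal (b / (1 - lam)) \<partial>\<pi>R)"
    by (intro nn_integral_mono lim)
  also have "\<dots> = ennreal (b / (1 - lam)) * emeasure \<pi>R (space \<pi>R)" by simp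
  also have "\<dots> \<le> ennreal (b / (1 - lam)) * 1" by (intro mult_left_mono emeasure_\<pi>R_space_le_1) simp
  finally show ?thesis by simp
qed

lemma nn_integral_R0_le: "(\<integral>\<^sup>+x\<in>R0. ennreal (f x) \<partial>\<pi>) \<le> ennreal (b / (1 - lam))"
proof -
  define h where "h i x = ennreal (min (f x) (real i))" for i x
  have "(\<integral>\<^sup>+x\<in>R0. ennreal (f x) \<partial>\<pi>) = (\<integral>\<^sup>+x. ennreal (f x) \<partial>\<pi>R)"
    using R0_meas pi_sets f_meas
    by (subst nn_integral_density) (simp_all add: measurable_cong_sets[OF pi_sets refl] mult.commute)
  also have "\<dots> = (\<integral>\<^sup>+x. (SUP i. h i x) \<partial>\<pi>R)"
  proof (rule nn_integral_cong)
    fix x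
    have "h (nat \<lceil>f x\<rceil>) x = ennreal (f x)"
      unfolding h_def by (simp add: min_def) linarith
    then have "ennreal (f x) \<le> (SUP i. h i x)" by (metis SUP_upper UNIV_I)
    moreover have "(SUP i. h i x) \<le> ennreal (f x)" by (rule SUP_least) (simp add: h_def ennreal_leI)
    ultimately show "ennreal (f x) = (SUP i. h i x)" by (rule antisym)
  qed
  also have "\<dots> = (SUP i. (\<integral>\<^sup>+x. h i x \<partial>\<pi>R))"
  proof (rule nn_integral_monotone_convergence_SUP)
    show "incseq h"
      by (rule incseq_SucI, rule le_funI) (simp add: h_def ennreal_leI)
    show "h i \<in> borel_measurable \<pi>R" for i
      unfolding h_def using f_meas by (subst measurable_cong_sets[OF sets_\<pi>R refl]) measurable
  qed
  also have "\<dots> \<le> ennreal (b / (1 - lam))"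
    unfolding h_def by (intro SUP_least nn_integral_min_le) simp
  finally show ?thesis .
qed

end

lemma Inf_le_div_one_minus:
  fixes f :: "'a \<Rightarrow> real"
  assumes ne: "R0 \<noteq> {}" and nn: "\<forall>x\<in>R0. 0 \<le> f x" and lam: "0 < lam" "lam < 1"
    and H: "\<forall>x\<in>R0. Inf (f ` R0) \<le> lam * f x + b"
  shows "Inf (f ` R0) \<le> b / (1 - lam)"
proof -
  let ?c = "Inf (f ` R0)"
  have "(?c - b) / lam \<le> ?c"
  proof (rule cInf_greatest)
    show "f ` R0 \<noteq> {}" using ne by simp
    fix y assume "y \<in> f ` R0"
    then show "(?c - b) / lam \<le> y" using H lam by (auto simp: field_simps)
  qed
  then have "?c - b \<le> lam * ?c" using lam by (simp add: field_simps)
  then show ?thesis using lam by (simp add: field_simps)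
qed

lemma exists_below_level:
  fixes f :: "'a \<Rightarrow> real"
  assumes ne: "R0 \<noteq> {}" and nn: "\<forall>x\<in>R0. 0 \<le> f x" and lam: "0 < lam" "lam < 1"
    and H: "\<forall>x\<in>R0. Inf (f ` R0) \<le> lam * f x + b" and b: "0 \<le> b" and d: "d > 2 * b / (1 - lam)"
  shows "\<exists>x\<in>R0. f x \<le> d"
proof -
  have "b / (1 - lam) \<le> 2 * b / (1 - lam)" using b lam by (simp add: divide_right_mono)
  then have "Inf (f ` R0) < d" using Inf_le_div_one_minus[OF ne nn lam H] d by linarith
  then obtain y where "y \<in> f ` R0" "y < d" using cInf_lessD[of "f ` R0" d] ne by auto
  then show ?thesis by force
qed

lemma minorization_const_le_1:
  assumes P_kernel: "P \<in> M \<rightarrow>\<^sub>M prob_algebra M" and Q: "prob_space Q" "sets Q = sets M"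
    and x: "x \<in> space M" and minor: "\<forall>A\<in>sets M. measure (P x) A \<ge> \<epsilon> * measure Q A"
  shows "\<epsilon> \<le> 1"
proof -
  have "sets (P x) = sets M" "prob_space (P x)"
    using measurable_space[OF P_kernel x] by (simp_all add: space_prob_algebra)
  then have "measure (P x) (space M) = 1"
    using prob_space.prob_space sets_eq_imp_space_eq by metis
  moreover have "measure Q (space M) = 1"
    using prob_space.prob_space[OF Q(1)] by (simp add: sets_eq_imp_space_eq[OF Q(2)])
  ultimately show ?thesis using minor by force
qed

lemma level_set_Inf_le_drift:
  assumes P_kernel: "P \<in> M \<rightarrow>\<^sub>M prob_algebra M" and f_nonneg: "\<forall>x\<in>space M. 0 \<le> f x"
    and drift: "\<forall>x\<in>R0. (\<integral>\<^sup>+y. ennreal (f y) \<partial>(P x)) \<le> ennreal (lam * f x + b)"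
    and R0: "R0 = {x\<in>space M. f x \<le> d0}" and lam: "0 < lam" and b: "0 \<le> b"
  shows "\<forall>x\<in>R0. Inf (f ` R0) \<le> lam * f x + b"
proof
  fix x assume x: "x \<in> R0"
  let ?c = "Inf (f ` R0)"
  have xs: "x \<in> space M" using x R0 by auto
  have bdd: "bdd_below (f ` R0)" using f_nonneg R0 by (auto intro!: bdd_belowI[of _ 0])
  have cle: "?c \<le> f y" if y: "y \<in> space M" for y
  proof (cases "y \<in> R0")
    case True then show ?thesis using bdd by (simp add: cInf_lower)
  next
    case False
    then have "f x < f y" using x y R0 by auto
    moreover have "?c \<le> f x" using bdd x by (simp add: cInf_lower)
    ultimately show ?thesis by simp
  qed
  have Px: "sets (P x) = sets M" "prob_space (P x)"
    using measurable_space[OF P_kernel xs] by (simp_all add: space_prob_algebra)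
  have "ennreal ?c = (\<integral>\<^sup>+y. ennreal ?c \<partial>P x)"
    using prob_space.emeasure_space_1[OF Px(2)] by simp
  also have "\<dots> \<le> (\<integral>\<^sup>+y. ennreal (f y) \<partial>P x)"
    by (rule nn_integral_mono) (simp add: sets_eq_imp_space_eq[OF Px(1)] cle ennreal_leI)
  also have "\<dots> \<le> ennreal (lam * f x + b)" using drift x by auto
  finally show "?c \<le> lam * f x + b"
    using lam b f_nonneg xs by (subst (asm) ennreal_le_iff) auto
qed

lemma level_set_truncated_drift:
  assumes P_kernel: "P \<in> M \<rightarrow>\<^sub>M prob_algebra M" and f_nonneg: "\<forall>x\<in>space M. 0 \<le> f x"
    and drift: "\<forall>x\<in>R0. (\<integral>\<^sup>+y. ennreal (f y) \<partial>(P x)) \<le> ennreal (lam * f x + b)"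
    and R0: "R0 = {x\<in>space M. f x \<le> d0}" and lam: "0 < lam" and b: "0 \<le> b"
    and x: "x \<in> space M"
  shows "(\<integral>\<^sup>+y. ennreal (min (f y) d0) \<partial>P x)
    \<le> ennreal lam * (ennreal (min (f x) d0) * indicator R0 x) + ennreal b * indicator R0 x
       + ennreal (min (f x) d0) * indicator (space M - R0) x"
proof (cases "x \<in> R0")
  case True
  then have "min (f x) d0 = f x" using R0 by auto
  moreover have "(\<integral>\<^sup>+y. ennreal (min (f y) d0) \<partial>P x) \<le> (\<integral>\<^sup>+y. ennreal (f y) \<partial>P x)"
    by (rule nn_integral_mono) (simp add: ennreal_leI)
  moreover have "ennreal (lam * f x + b) = ennreal lam * ennreal (f x) + ennreal b"
    using lam b f_nonneg x by (simp add: ennreal_mult ennreal_plus)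
  ultimately show ?thesis using drift True x by (auto intro: order_trans)
next
  case False
  then have "min (f x) d0 = d0" using R0 x by auto
  moreover have "(\<integral>\<^sup>+y. ennreal (min (f y) d0) \<partial>P x) \<le> (\<integral>\<^sup>+y. ennreal d0 \<partial>P x)"
    by (rule nn_integral_mono) (simp add: ennreal_leI)
  moreover have "prob_space (P x)"
    using measurable_space[OF P_kernel x] by (simp add: space_prob_algebra)
  ultimately show ?thesis using False x by (simp add: prob_space.emeasure_space_1)
qed

text \<open>Under (C1), truncating \<open>f\<close> at the level \<open>d\<^sub>0\<close> does not change it on \<open>R\<^sub>0\<close>, cannot increase it
  off \<open>R\<^sub>0\<close>, and makes all integrals finite, so stationarity of \<open>\<pi>\<close> can be applied directly.\<close>

lemma level_set_nn_integral_R0_le: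
  assumes P_kernel: "P \<in> M \<rightarrow>\<^sub>M prob_algebra M" and f_nonneg: "\<forall>x\<in>space M. 0 \<le> f x"
    and f_meas: "f \<in> borel_measurable M"
    and drift: "\<forall>x\<in>R0. (\<integral>\<^sup>+y. ennreal (f y) \<partial>(P x)) \<le> ennreal (lam * f x + b)"
    and R0: "R0 = {x\<in>space M. f x \<le> d0}" and lam: "0 < lam" "lam < 1" and b: "0 \<le> b"
    and pi_prob: "prob_space \<pi>" and pi_sets: "sets \<pi> = sets M" and pi_stat: "\<pi> \<bind> P = \<pi>"
  shows "(\<integral>\<^sup>+x\<in>R0. ennreal (f x) \<partial>\<pi>) \<le> ennreal (b / (1 - lam))"
proof -
  interpret \<pi>: prob_space \<pi> by (rule pi_prob)
  define g where "g x = ennreal (min (f x) d0)" for x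
  have R0_meas: "R0 \<in> sets \<pi>" "space M - R0 \<in> sets \<pi>"
    unfolding R0 pi_sets using f_meas by measurable
  have g_meas: "g \<in> borel_measurable M" unfolding g_def using f_meas by measurable
  then have g_meas\<pi>: "g \<in> borel_measurable \<pi>" by (simp add: measurable_cong_sets[OF pi_sets refl])
  define a where "a = (\<integral>\<^sup>+x. g x * indicator R0 x \<partial>\<pi>)"
  define c where "c = (\<integral>\<^sup>+x. g x * indicator (space M - R0) x \<partial>\<pi>)"
  have fin: "(\<integral>\<^sup>+x. g x * indicator A x \<partial>\<pi>) \<noteq> \<infinity>" for A
  proof -
    have "(\<integral>\<^sup>+x. g x * indicator A x \<partial>\<pi>) \<le> (\<integral>\<^sup>+x. ennreal d0 \<partial>\<pi>)"
      by (rule nn_integral_mono) (auto simp: g_def ennreal_leI split: split_indicator)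
    then show ?thesis using \<pi>.emeasure_space_1 by (auto simp: top_unique)
  qed
  have "a + c = (\<integral>\<^sup>+x. g x * indicator R0 x + g x * indicator (space M - R0) x \<partial>\<pi>)"
    unfolding a_def c_def using g_meas\<pi> R0_meas by (intro nn_integral_add[symmetric]) auto
  also have "\<dots> = (\<integral>\<^sup>+x. g x \<partial>(\<pi> \<bind> P))"
    by (subst pi_stat, intro nn_integral_cong)
      (auto simp: sets_eq_imp_space_eq[OF pi_sets] split: split_indicator)
  also have "\<dots> = (\<integral>\<^sup>+x. (\<integral>\<^sup>+y. g y \<partial>P x) \<partial>\<pi>)"
    using measurable_prob_algebraD[OF P_kernel] g_meas
    by (intro nn_integral_bind) (simp_all add: measurable_cong_sets[OF pi_sets refl])
  also have "\<dots> \<le> (\<integral>\<^sup>+x. ennreal lam * (g x * indicator R0 x) + ennreal b * indicator R0 x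
                        + g x * indicator (space M - R0) x \<partial>\<pi>)"
    unfolding g_def
    using level_set_truncated_drift[OF P_kernel f_nonneg drift R0 lam(1) b]
    by (intro nn_integral_mono) (simp add: sets_eq_imp_space_eq[OF pi_sets])
  also have "\<dots> = ennreal lam * a + ennreal b * emeasure \<pi> R0 + c"
    unfolding a_def c_def using g_meas\<pi> R0_meas
    by (simp add: nn_integral_add nn_integral_cmult nn_integral_cmult_indicator)
  finally have "a \<le> ennreal lam * a + ennreal b * emeasure \<pi> R0"
    using fin[of "space M - R0"] by (simp add: c_def add.commute ennreal_add_left_cancel_le)
  moreover obtain r where r: "a = ennreal r" "0 \<le> r" using fin[of R0] by (cases a) (auto simp: a_def)
  ultimately have "ennreal r \<le> ennreal (lam * r + b * measure \<pi> R0)"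
    using lam b by (simp add: \<pi>.emeasure_eq_measure ennreal_mult ennreal_plus)
  then have "r \<le> lam * r + b * measure \<pi> R0" using lam b r by (subst (asm) ennreal_le_iff) auto
  moreover have "b * measure \<pi> R0 \<le> b" using b by (simp add: mult_left_le)
  ultimately have "r \<le> b / (1 - lam)" using lam by (simp add: field_simps)
  moreover have "(\<integral>\<^sup>+x\<in>R0. ennreal (f x) \<partial>\<pi>) = a"
    unfolding a_def g_def by (rule nn_integral_cong) (auto simp: R0 split: split_indicator)
  ultimately show ?thesis using r by (simp add: ennreal_leI)
qed

lemma reversible_split_consequences:
  assumes pi_prob: "prob_space \<pi>" and pi_sets: "sets \<pi> = sets M"
    and R0_meas: "R0 \<in> sets M"
    and f_meas: "f \<in> borel_measurable M" and f_nonneg: "\<forall>x\<in>space M. 0 \<le> f x"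
    and lam: "0 < lam" "lam < 1" and b: "0 \<le> b"
    and drift: "\<forall>x\<in>R0. (\<integral>\<^sup>+y. ennreal (f y) \<partial>(kcomp M (map (trunc_kernel M R0) Ps) x))
                          \<le> ennreal (lam * f x + b)"
    and Ps: "\<forall>K\<in>set Ps. K \<in> M \<rightarrow>\<^sub>M prob_algebra M \<and> reversible_kernel M \<pi> K"
    and singleton_meas: "\<forall>x\<in>space M. {x} \<in> sets M"
  shows "(\<forall>x\<in>R0. Inf (f ` R0) \<le> lam * f x + b)
    \<and> (\<integral>\<^sup>+x\<in>R0. ennreal (f x) \<partial>\<pi>) \<le> ennreal (b / (1 - lam))"
proof -
  let ?T = "kcomp M (map (trunc_kernel M R0) Ps)"
  let ?\<mu> = "density \<pi> (indicator R0)"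
  have "\<forall>K\<in>set (map (trunc_kernel M R0) Ps). K \<in> M \<rightarrow>\<^sub>M prob_algebra M
      \<and> (\<forall>x\<in>R0. emeasure (K x) (space M - R0) = 0) \<and> ?\<mu> \<bind> K = ?\<mu>"
  proof
    fix K assume "K \<in> set (map (trunc_kernel M R0) Ps)"
    then obtain K' where K': "K' \<in> set Ps" "K = trunc_kernel M R0 K'" by auto
    have K'_kernel: "K' \<in> M \<rightarrow>\<^sub>M prob_algebra M" using Ps K'(1) by blast
    interpret truncation M R0 K' by (rule truncation.intro[OF K'_kernel R0_meas singleton_meas])
    show "K \<in> M \<rightarrow>\<^sub>M prob_algebra M \<and> (\<forall>x\<in>R0. emeasure (K x) (space M - R0) = 0) \<and> ?\<mu> \<bind> K = ?\<mu>"
      using K' Ps T_kernel T_confined T_stationary[OF pi_sets] by auto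
  qed
  from kcomp_confined_stationary[OF R0_meas _ this]
  have "?T \<in> M \<rightarrow>\<^sub>M prob_algebra M" "\<forall>x\<in>R0. emeasure (?T x) (space M - R0) = 0"
    "?\<mu> \<bind> ?T = ?\<mu>"
    using pi_sets by simp_all
  then interpret confined_drift M \<pi> R0 f lam b ?T
    by (intro confined_drift.intro drift R0_meas f_meas f_nonneg lam b pi_prob pi_sets)
  show ?thesis using Inf_le_drift nn_integral_R0_le by blast
qed

lemma drift_consequences:
  assumes P_kernel: "P \<in> M \<rightarrow>\<^sub>M prob_algebra M"
    and pi_prob: "prob_space \<pi>" and pi_sets: "sets \<pi> = sets M" and pi_stat: "\<pi> \<bind> P = \<pi>"
    and R0_meas: "R0 \<in> sets M"
    and f_meas: "f \<in> borel_measurable M" and f_nonneg: "\<forall>x\<in>space M. 0 \<le> f x"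
    and lam: "0 < lam" "lam < 1" and b: "0 \<le> b"
    and drift: "\<forall>x\<in>R0. (\<integral>\<^sup>+y. ennreal (f y) \<partial>(P x)) \<le> ennreal (lam * f x + b)"
    and C: "(\<exists>d0>0. R0 = {x\<in>space M. f x \<le> d0})
            \<or> (\<exists>Ps. length Ps \<ge> 1
                  \<and> (\<forall>K\<in>set Ps. K \<in> M \<rightarrow>\<^sub>M prob_algebra M \<and> reversible_kernel M \<pi> K)
                  \<and> (\<forall>x\<in>space M. P x = kcomp M Ps x)
                  \<and> (\<forall>x\<in>space M. {x} \<in> sets M)
                  \<and> (\<forall>x\<in>R0. (\<integral>\<^sup>+y. ennreal (f y) \<partial>(kcomp M (map (trunc_kernel M R0) Ps) x))
                              \<le> (\<integral>\<^sup>+y. ennreal (f y) \<partial>(P x))))"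
  shows "(\<forall>x\<in>R0. Inf (f ` R0) \<le> lam * f x + b)
    \<and> (\<integral>\<^sup>+x\<in>R0. ennreal (f x) \<partial>\<pi>) \<le> ennreal (b / (1 - lam))"
  using C
proof (elim disjE exE conjE)
  fix d0 assume "0 < d0" "R0 = {x \<in> space M. f x \<le> d0}"
  then show ?thesis
    using level_set_Inf_le_drift[OF P_kernel f_nonneg drift _ lam(1) b]
      level_set_nn_integral_R0_le[OF P_kernel f_nonneg f_meas drift _ lam b pi_prob pi_sets pi_stat]
    by blast
next
  fix Ps
  assume Ps: "\<forall>K\<in>set Ps. K \<in> M \<rightarrow>\<^sub>M prob_algebra M \<and> reversible_kernel M \<pi> K"
    and singletons: "\<forall>x\<in>space M. {x} \<in> sets M"
    and trunc_le: "\<forall>x\<in>R0. (\<integral>\<^sup>+y. ennreal (f y) \<partial>(kcomp M (map (trunc_kernel M R0) Ps) x))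
                  \<le> (\<integral>\<^sup>+y. ennreal (f y) \<partial>(P x))"
  have "\<forall>x\<in>R0. (\<integral>\<^sup>+y. ennreal (f y) \<partial>(kcomp M (map (trunc_kernel M R0) Ps) x)) \<le> ennreal (lam * f x + b)"
    using trunc_le drift order_trans by blast
  then show ?thesis
    by (rule reversible_split_consequences[OF pi_prob pi_sets R0_meas f_meas f_nonneg lam b _ Ps singletons])
qed
lemma ennreal_1_plus_plus: "0 \<le> x \<Longrightarrow> 0 \<le> y \<Longrightarrow> ennreal (1 + x + y) = 1 + ennreal x + ennreal y"
  by (metis ennreal_1 ennreal_plus add_nonneg_nonneg zero_le_one)

lemma distr_pair_snd_prob:
  assumes N: "prob_space N" and L: "prob_space L"
  shows "distr (N \<Otimes>\<^sub>M L) L snd = L"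
proof (rule measure_eqI)
  interpret N: prob_space N by (rule N)
  interpret L: prob_space L by (rule L)
  show "sets (distr (N \<Otimes>\<^sub>M L) L snd) = sets L" by simp
  fix A assume "A \<in> sets (distr (N \<Otimes>\<^sub>M L) L snd)"
  then have A: "A \<in> sets L" by simp
  have "emeasure (distr (N \<Otimes>\<^sub>M L) L snd) A = emeasure (N \<Otimes>\<^sub>M L) (space N \<times> A)"
    using A sets.sets_into_space[OF A]
    by (subst emeasure_distr) (auto simp: space_pair_measure intro!: arg_cong2[where f=emeasure])
  also have "\<dots> = emeasure L A"
    using A L.emeasure_pair_measure_Times[of "space N" N A] N.emeasure_space_1 by simp
  finally show "emeasure (distr (N \<Otimes>\<^sub>M L) L snd) A = emeasure L A" .
qed

lemma nn_integral_pair_fst_prob: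
  assumes L: "prob_space L" and g: "g \<in> borel_measurable N"
  shows "(\<integral>\<^sup>+z. g (fst z) \<partial>(N \<Otimes>\<^sub>M L)) = (\<integral>\<^sup>+x. g x \<partial>N)"
  using nn_integral_distr[of fst "N \<Otimes>\<^sub>M L" N g] g by (simp add: prob_space.distr_pair_fst[OF L])

lemma nn_integral_pair_snd_prob:
  assumes N: "prob_space N" and L: "prob_space L" and g: "g \<in> borel_measurable L"
  shows "(\<integral>\<^sup>+z. g (snd z) \<partial>(N \<Otimes>\<^sub>M L)) = (\<integral>\<^sup>+x. g x \<partial>L)"
  using nn_integral_distr[of snd "N \<Otimes>\<^sub>M L" L g] g by (simp add: distr_pair_snd_prob[OF N L])

lemma emeasure_pair4_Times:
  fixes B :: "bool measure"
  assumes B: "prob_space B" "sets B = UNIV"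
    and Q1: "prob_space Q1" "sets Q1 = sets M" and X: "prob_space X" "sets X = sets M"
    and Y: "prob_space Y" "sets Y = sets M"
    and A1: "A1 \<in> sets M" and A2: "A2 \<in> sets M" and A3: "A3 \<in> sets M"
  shows "emeasure (B \<Otimes>\<^sub>M Q1 \<Otimes>\<^sub>M X \<Otimes>\<^sub>M Y) (C \<times> A1 \<times> A2 \<times> A3) =
    emeasure B C * emeasure Q1 A1 * emeasure X A2 * emeasure Y A3"
proof -
  interpret X: prob_space X by fact
  interpret Y: prob_space Y by fact
  interpret Q1: prob_space Q1 by fact
  interpret B: prob_space B by fact
  interpret XY: prob_space "X \<Otimes>\<^sub>M Y" by (rule prob_space_pair) fact+
  interpret QXY: prob_space "Q1 \<Otimes>\<^sub>M X \<Otimes>\<^sub>M Y" by (rule prob_space_pair) (fact, rule XY.prob_space_axioms)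
  have s1: "A2 \<times> A3 \<in> sets (X \<Otimes>\<^sub>M Y)" using A2 A3 X Y by simp
  have s2: "A1 \<times> A2 \<times> A3 \<in> sets (Q1 \<Otimes>\<^sub>M X \<Otimes>\<^sub>M Y)" using A1 A2 A3 X Y Q1 by simp
  have "emeasure (B \<Otimes>\<^sub>M Q1 \<Otimes>\<^sub>M X \<Otimes>\<^sub>M Y) (C \<times> A1 \<times> A2 \<times> A3) =
        emeasure B C * emeasure (Q1 \<Otimes>\<^sub>M X \<Otimes>\<^sub>M Y) (A1 \<times> A2 \<times> A3)"
    using B s2 by (intro QXY.emeasure_pair_measure_Times) auto
  also have "emeasure (Q1 \<Otimes>\<^sub>M X \<Otimes>\<^sub>M Y) (A1 \<times> A2 \<times> A3) = emeasure Q1 A1 * emeasure (X \<Otimes>\<^sub>M Y) (A2 \<times> A3)"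
    using A1 Q1 s1 by (intro XY.emeasure_pair_measure_Times) auto
  also have "emeasure (X \<Otimes>\<^sub>M Y) (A2 \<times> A3) = emeasure X A2 * emeasure Y A3"
    using A2 A3 X Y by (intro Y.emeasure_pair_measure_Times) auto
  finally show ?thesis by (simp add: mult.assoc)
qed

lemma le_power_if_inverse_power_mult_le_1:
  fixes x :: ennreal
  assumes a: "0 \<le> a" and m: "0 < m" and le: "inverse (ennreal a) ^ m * x \<le> 1"
  shows "x \<le> ennreal (a ^ m)"
proof (cases "a = 0")
  case True
  then have "top * x \<le> 1" using le m by (simp add: top_power_ennreal)
  then have "x = 0" by (auto simp: ennreal_top_mult top_unique split: if_splits)
  then show ?thesis by simp
next
  case False
  then have a0: "0 < a" using a by simp
  then have "ennreal (inverse a ^ m) * x \<le> 1" using le by (simp add: inverse_ennreal ennreal_power)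
  moreover have "x \<noteq> top"
  proof
    assume "x = top"
    then have "ennreal (inverse a ^ m) * x = top" using a0 by (simp add: ennreal_mult_top)
    then show False using calculation by (simp add: top_unique)
  qed
  then obtain r where r: "x = ennreal r" "0 \<le> r" by (cases x) auto
  ultimately have "inverse a ^ m * r \<le> 1" using a0 by (simp add: ennreal_mult[symmetric] ennreal_le_1)
  then have "r \<le> a ^ m" using a0 by (simp add: power_inverse field_simps)
  then show ?thesis using r by (simp add: ennreal_leI)
qed
locale coupling =
  fixes M :: "'a measure" and P :: "'a \<Rightarrow> 'a measure" and \<pi> \<nu> Q :: "'a measure"
    and R0 :: "'a set" and f :: "'a \<Rightarrow> real" and lam b d \<epsilon> :: real
  assumes P_kernel: "P \<in> M \<rightarrow>\<^sub>M prob_algebra M"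
    and pi_prob: "prob_space \<pi>" and pi_sets: "sets \<pi> = sets M" and pi_stat: "\<pi> \<bind> P = \<pi>"
    and R0_meas: "R0 \<in> sets M"
    and f_meas: "f \<in> borel_measurable M" and f_nonneg: "\<forall>x\<in>space M. 0 \<le> f x"
    and lam: "0 < lam" "lam < 1" and b: "0 \<le> b"
    and drift: "\<forall>x\<in>R0. (\<integral>\<^sup>+y. ennreal (f y) \<partial>(P x)) \<le> ennreal (lam * f x + b)"
    and d: "d > 2 * b / (1 - lam)"
    and eps: "0 < \<epsilon>" "\<epsilon> \<le> 1"
    and Q_prob: "prob_space Q" and Q_sets: "sets Q = sets M"
    and minor: "\<forall>x\<in>{x\<in>space M. f x \<le> d}. \<forall>A\<in>sets M. measure (P x) A \<ge> \<epsilon> * measure Q A"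
    and nu_prob: "prob_space \<nu>" and nu_sets: "sets \<nu> = sets M"
    and nu_R0: "measure \<nu> R0 = 1"
    and R0_integral: "(\<integral>\<^sup>+x\<in>R0. ennreal (f x) \<partial>\<pi>) \<le> ennreal (b / (1 - lam))"
begin

definition "small_set = {x\<in>space M. f x \<le> d}"

lemma small_set_meas[measurable]: "small_set \<in> sets M"
  unfolding small_set_def using f_meas by measurable

lemma R0_subset: "R0 \<subseteq> space M" using R0_meas sets.sets_into_space by auto

lemma P_in_prob_algebra: "x \<in> space M \<Longrightarrow> P x \<in> space (prob_algebra M)"
  by (rule measurable_space[OF P_kernel])

lemma P_sets[simp]: "x \<in> space M \<Longrightarrow> sets (P x) = sets M"
  using P_in_prob_algebra by (simp add: space_prob_algebra)

lemma P_prob: "x \<in> space M \<Longrightarrow> prob_space (P x)"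
  using P_in_prob_algebra by (simp add: space_prob_algebra)

text \<open>On the small set \<open>P x = \<epsilon> Q + (1 - \<epsilon>) residual x\<close>.\<close>

definition "residual x = (if x \<in> small_set \<and> \<epsilon> < 1 then
   measure_of (space M) (sets M) (\<lambda>A. ennreal ((measure (P x) A - \<epsilon> * measure Q A) / (1 - \<epsilon>)))
   else P x)"

lemma emeasure_residual:
  assumes x: "x \<in> small_set" and e1: "\<epsilon> < 1" and A: "A \<in> sets M"
  shows "emeasure (residual x) A = ennreal ((measure (P x) A - \<epsilon> * measure Q A) / (1 - \<epsilon>))"
proof -
  have xs: "x \<in> space M" using x by (simp add: small_set_def)
  interpret Px: prob_space "P x" using P_prob[OF xs] .
  interpret Qp: prob_space Q using Q_prob .
  let ?g = "\<lambda>A. (measure (P x) A - \<epsilon> * measure Q A) / (1 - \<epsilon>)"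
  have gnn: "B \<in> sets M \<Longrightarrow> 0 \<le> ?g B" for B
    using minor x e1 by (auto simp: small_set_def)
  have ca: "countably_additive (sets M) (\<lambda>A. ennreal (?g A))"
  proof (rule countably_additiveI)
    fix F :: "nat \<Rightarrow> 'a set"
    assume F: "range F \<subseteq> sets M" "disjoint_family F" "\<Union> (range F) \<in> sets M"
    have s1: "(\<lambda>i. measure (P x) (F i)) sums measure (P x) (\<Union>i. F i)"
      using Px.finite_measure_UNION[of F] F by (simp add: P_sets[OF xs])
    have s2: "(\<lambda>i. measure Q (F i)) sums measure Q (\<Union>i. F i)"
      using Qp.finite_measure_UNION[of F] F by (simp add: Q_sets)
    have s: "(\<lambda>i. ?g (F i)) sums ?g (\<Union>i. F i)"
      by (intro sums_divide sums_diff s1 sums_mult s2)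
    show "(\<Sum>i. ennreal (?g (F i))) = ennreal (?g (\<Union>i. F i))"
      using s gnn F(1) by (subst suminf_ennreal2) (auto simp: sums_iff)
  qed
  have pos: "positive (sets M) (\<lambda>A. ennreal (?g A))"
    by (simp add: positive_def)
  show ?thesis
    unfolding residual_def using x e1
    by (simp add: emeasure_measure_of_sigma[OF sets.sigma_algebra_axioms pos ca A])
qed

lemma sets_residual[simp]: "x \<in> space M \<Longrightarrow> sets (residual x) = sets M"
  by (simp add: residual_def)

lemma minorization: assumes x: "x \<in> small_set" and A: "A \<in> sets M" shows "\<epsilon> * measure Q A \<le> measure (P x) A"
  using minor x A by (auto simp: small_set_def)

lemma P_split:
  assumes x: "x \<in> small_set" and A: "A \<in> sets M"
  shows "emeasure (P x) A = ennreal \<epsilon> * emeasure Q A + ennreal (1 - \<epsilon>) * emeasure (residual x) A"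
proof -
  have xs: "x \<in> space M" using x by (simp add: small_set_def)
  interpret Px: prob_space "P x" using P_prob[OF xs] .
  interpret Qp: prob_space Q using Q_prob .
  show ?thesis
  proof (cases "\<epsilon> < 1")
    case True
    define g where "g = (measure (P x) A - \<epsilon> * measure Q A) / (1 - \<epsilon>)"
    have g0: "0 \<le> g" using minorization[OF x A] True by (simp add: g_def)
    have eq: "measure (P x) A = \<epsilon> * measure Q A + (1 - \<epsilon>) * g"
      using True by (simp add: g_def field_simps)
    have "emeasure (P x) A = ennreal (\<epsilon> * measure Q A) + ennreal ((1 - \<epsilon>) * g)"
      using eq eps True g0 by (simp add: Px.emeasure_eq_measure ennreal_plus[symmetric] del: ennreal_plus)
    also have "\<dots> = ennreal \<epsilon> * emeasure Q A + ennreal (1 - \<epsilon>) * emeasure (residual x) A"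
      using True eps g0 by (simp add: emeasure_residual[OF x True A] g_def[symmetric] Qp.emeasure_eq_measure ennreal_mult)
    finally show ?thesis .
  next
    case False
    then have e: "\<epsilon> = 1" using eps by simp
    have A': "space M - A \<in> sets M" using A by auto
    have 1: "measure Q A \<le> measure (P x) A" using minorization[OF x A] e by simp
    have 2: "measure Q (space M - A) \<le> measure (P x) (space M - A)" using minorization[OF x A'] e by simp
    have "measure Q (space M - A) = 1 - measure Q A"
      using Qp.prob_compl[of A] A by (simp add: Q_sets sets_eq_imp_space_eq[OF Q_sets])
    moreover have "measure (P x) (space M - A) = 1 - measure (P x) A"
      using Px.prob_compl[of A] A xs by (simp add: sets_eq_imp_space_eq[OF P_sets[OF xs]])
    ultimately have "measure Q A = measure (P x) A" using 1 2 by simp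
    then show ?thesis using e by (simp add: Px.emeasure_eq_measure Qp.emeasure_eq_measure)
  qed
qed

lemma prob_space_residual: assumes xs: "x \<in> space M" shows "prob_space (residual x)"
proof (cases "x \<in> small_set \<and> \<epsilon> < 1")
  case True
  interpret Px: prob_space "P x" using P_prob[OF xs] .
  interpret Qp: prob_space Q using Q_prob .
  have "emeasure (residual x) (space M) = 1"
    using True eps by (simp add: emeasure_residual Px.prob_space[unfolded sets_eq_imp_space_eq[OF P_sets[OF xs]]]
        Qp.prob_space[unfolded sets_eq_imp_space_eq[OF Q_sets]])
  then show ?thesis using xs by (intro prob_spaceI) (simp add: sets_eq_imp_space_eq[OF sets_residual[OF xs]])
next
  case False then show ?thesis using P_prob[OF xs] by (auto simp: residual_def)
qed

lemma residual_kernel: "residual \<in> M \<rightarrow>\<^sub>M prob_algebra M"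
proof (rule measurable_prob_algebra_generated[where \<Omega>="space M" and G="sets M"])
  show "sets M = sigma_sets (space M) (sets M)" by (simp add: sets.sigma_sets_eq)
  show "Int_stable (sets M)" by (auto simp: Int_stable_def)
  show "sets M \<subseteq> Pow (space M)" using sets.space_closed by auto
  show "\<And>a. a \<in> space M \<Longrightarrow> prob_space (residual a)" by (rule prob_space_residual)
  show "\<And>a. a \<in> space M \<Longrightarrow> sets (residual a) = sets M" by simp
  fix A assume A: "A \<in> sets M"
  have mP: "(\<lambda>x. measure (P x) A) \<in> borel_measurable M"
    using measurable_compose[OF P_kernel measurable_measure_prob_algebra[OF A]] by simp
  have eP: "(\<lambda>x. emeasure (P x) A) \<in> borel_measurable M"
    using measurable_compose[OF measurable_prob_algebraD[OF P_kernel] measurable_emeasure_subprob_algebra[OF A]] by simp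
  have "(\<lambda>x. emeasure (residual x) A) \<in> borel_measurable M \<longleftrightarrow>
     (\<lambda>x. if x \<in> small_set \<and> \<epsilon> < 1 then ennreal ((measure (P x) A - \<epsilon> * measure Q A) / (1 - \<epsilon>)) else emeasure (P x) A) \<in> borel_measurable M"
  proof (intro measurable_cong)
    fix w assume "w \<in> space M"
    show "emeasure (residual w) A = (if w \<in> small_set \<and> \<epsilon> < 1 then ennreal ((measure (P w) A - \<epsilon> * measure Q A) / (1 - \<epsilon>)) else emeasure (P w) A)"
      using emeasure_residual[OF _ _ A, of w] by (cases "w \<in> small_set \<and> \<epsilon> < 1") (auto simp: residual_def)
  qed
  also have "\<dots>" using mP eP by measurable
  finally show "(\<lambda>x. emeasure (residual x) A) \<in> borel_measurable M" .
qed

declare R0_meas[measurable] f_meas[measurable]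

text \<open>A state \<open>(x, y, j, alive, coupled)\<close> records the positions of the two copies (once they
  have coupled, \<open>y\<close> is stale and the second copy sits at \<open>x\<close>, see \<open>chain_y\<close>), the number \<open>j\<close>
  of joint visits to the small set, whether both copies have stayed in \<open>R\<^sub>0\<close> so far, and
  whether they have coupled. A move draws \<open>(c, z, x', y')\<close>: the \<open>\<epsilon>\<close>-coin \<open>c\<close> (only tossed on
  joint visits), a common point \<open>z \<sim> Q\<close>, and independent moves \<open>x'\<close>, \<open>y'\<close>.\<close>

definition "state_space = M \<Otimes>\<^sub>M M \<Otimes>\<^sub>M (count_space UNIV :: nat measure) \<Otimes>\<^sub>M (count_space UNIV :: bool measure) \<Otimes>\<^sub>M (count_space UNIV :: bool measure)"
definition "noise_space = (count_space UNIV :: bool measure) \<Otimes>\<^sub>M M \<Otimes>\<^sub>M M \<Otimes>\<^sub>M M"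

definition st_x :: "'a \<times> 'a \<times> nat \<times> bool \<times> bool \<Rightarrow> 'a" where "st_x s = fst s"
definition st_y :: "'a \<times> 'a \<times> nat \<times> bool \<times> bool \<Rightarrow> 'a" where "st_y s = fst (snd s)"
definition st_visits :: "'a \<times> 'a \<times> nat \<times> bool \<times> bool \<Rightarrow> nat" where "st_visits s = fst (snd (snd s))"
definition st_alive :: "'a \<times> 'a \<times> nat \<times> bool \<times> bool \<Rightarrow> bool" where "st_alive s = fst (snd (snd (snd s)))"
definition st_coupled :: "'a \<times> 'a \<times> nat \<times> bool \<times> bool \<Rightarrow> bool" where "st_coupled s = snd (snd (snd (snd s)))"
definition "chain_y s = (if st_coupled s then st_x s else st_y s)"

definition "try_couple s \<longleftrightarrow> \<not> st_coupled s \<and> st_x s \<in> small_set \<and> st_y s \<in> small_set"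
definition "next_visits s = st_visits s + (if st_x s \<in> small_set \<and> chain_y s \<in> small_set then 1 else 0)"
definition "next_alive s \<longleftrightarrow> st_alive s \<and> st_x s \<in> R0 \<and> chain_y s \<in> R0"

definition "coin = measure_pmf (bernoulli_pmf \<epsilon>)"
definition "no_coin = measure_pmf (bernoulli_pmf 0)"

definition "noise s = (if try_couple s then coin \<Otimes>\<^sub>M Q \<Otimes>\<^sub>M residual (st_x s) \<Otimes>\<^sub>M residual (st_y s)
                    else no_coin \<Otimes>\<^sub>M Q \<Otimes>\<^sub>M P (st_x s) \<Otimes>\<^sub>M P (st_y s))"

definition update :: "'a \<times> 'a \<times> nat \<times> bool \<times> bool \<Rightarrow> bool \<times> 'a \<times> 'a \<times> 'a \<Rightarrow> 'a \<times> 'a \<times> nat \<times> bool \<times> bool" where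
  "update s w = (case w of (c, z, x', y') \<Rightarrow>
     if st_coupled s then (x', x', next_visits s, next_alive s, True)
     else if c then (z, z, next_visits s, next_alive s, True) else (x', y', next_visits s, next_alive s, False))"

definition "step s = distr (noise s) state_space (update s)"

lemma st_x_meas[measurable]: "st_x \<in> state_space \<rightarrow>\<^sub>M M" unfolding st_x_def state_space_def by measurable
lemma st_y_meas[measurable]: "st_y \<in> state_space \<rightarrow>\<^sub>M M" unfolding st_y_def state_space_def by measurable
lemma st_visits_meas[measurable]: "st_visits \<in> state_space \<rightarrow>\<^sub>M count_space UNIV" unfolding st_visits_def state_space_def by measurable
lemma st_alive_meas[measurable]: "st_alive \<in> state_space \<rightarrow>\<^sub>M count_space UNIV" unfolding st_alive_def state_space_def by measurable
lemma st_coupled_meas[measurable]: "st_coupled \<in> state_space \<rightarrow>\<^sub>M count_space UNIV" unfolding st_coupled_def state_space_def by measurable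
lemma chain_y_meas[measurable]: "chain_y \<in> state_space \<rightarrow>\<^sub>M M" unfolding chain_y_def by measurable

lemma try_couple_meas[measurable]: "Measurable.pred state_space try_couple" unfolding try_couple_def by measurable
lemma next_alive_meas[measurable]: "Measurable.pred state_space next_alive" unfolding next_alive_def by measurable
lemma next_visits_meas[measurable]: "next_visits \<in> state_space \<rightarrow>\<^sub>M count_space UNIV" unfolding next_visits_def by measurable

lemma coin_in_prob_algebra: "coin \<in> space (prob_algebra (count_space UNIV))"
  unfolding coin_def by (simp add: space_prob_algebra prob_space_measure_pmf)
lemma no_coin_in_prob_algebra: "no_coin \<in> space (prob_algebra (count_space UNIV))"
  unfolding no_coin_def by (simp add: space_prob_algebra prob_space_measure_pmf)
lemma Q_in_prob_algebra: "Q \<in> space (prob_algebra M)"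
  using Q_prob Q_sets by (simp add: space_prob_algebra)

lemma noise_kernel: "noise \<in> state_space \<rightarrow>\<^sub>M prob_algebra noise_space"
proof -
  have k1: "(\<lambda>s. coin \<Otimes>\<^sub>M Q \<Otimes>\<^sub>M residual (st_x s) \<Otimes>\<^sub>M residual (st_y s)) \<in> state_space \<rightarrow>\<^sub>M prob_algebra noise_space"
    unfolding noise_space_def
    by (intro measurable_pair_prob measurable_const coin_in_prob_algebra Q_in_prob_algebra
        measurable_compose[OF st_x_meas residual_kernel] measurable_compose[OF st_y_meas residual_kernel])
  have k0: "(\<lambda>s. no_coin \<Otimes>\<^sub>M Q \<Otimes>\<^sub>M P (st_x s) \<Otimes>\<^sub>M P (st_y s)) \<in> state_space \<rightarrow>\<^sub>M prob_algebra noise_space"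
    unfolding noise_space_def
    by (intro measurable_pair_prob measurable_const no_coin_in_prob_algebra Q_in_prob_algebra
        measurable_compose[OF st_x_meas P_kernel] measurable_compose[OF st_y_meas P_kernel])
  show ?thesis unfolding noise_def
    by (rule measurable_If[OF k1 k0]) simp
qed

lemma update_measurable: "(\<lambda>(s, w). update s w) \<in> state_space \<Otimes>\<^sub>M noise_space \<rightarrow>\<^sub>M state_space"
  unfolding update_def noise_space_def by (subst (2) state_space_def) measurable

lemma step_kernel: "step \<in> state_space \<rightarrow>\<^sub>M prob_algebra state_space"
  unfolding step_def by (rule measurable_distr_prob_space2[OF noise_kernel update_measurable])

lemma space_noise_space: "space noise_space = UNIV \<times> space M \<times> space M \<times> space M"
  by (simp add: noise_space_def space_pair_measure)

lemma space_state_space: "space state_space = space M \<times> space M \<times> UNIV \<times> UNIV \<times> UNIV"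
  by (simp add: state_space_def space_pair_measure)

lemma coin_facts:
  "prob_space coin" "sets coin = UNIV" "prob_space no_coin" "sets no_coin = UNIV"
  "emeasure coin {True} = ennreal \<epsilon>" "emeasure coin {False} = ennreal (1 - \<epsilon>)"
  "emeasure no_coin {True} = 0" "emeasure no_coin {False} = 1"
  "emeasure coin UNIV = 1" "emeasure no_coin UNIV = 1"
  using eps by (simp_all add: coin_def no_coin_def prob_space_measure_pmf emeasure_pmf_single measure_pmf.emeasure_space_1[simplified])

lemma noise_split:
  "noise s = (if try_couple s then coin else no_coin) \<Otimes>\<^sub>M Q \<Otimes>\<^sub>M (if try_couple s then residual (st_x s) else P (st_x s))
            \<Otimes>\<^sub>M (if try_couple s then residual (st_y s) else P (st_y s))"
  by (simp add: noise_def)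

lemma sets_noise: "s \<in> space state_space \<Longrightarrow> sets (noise s) = sets noise_space"
  using measurable_space[OF noise_kernel] by (simp add: space_prob_algebra)

lemma emeasure_noise_union:
  fixes Bs :: "bool measure"
  assumes A: "A \<in> sets M"
    and pX: "prob_space X" "sets X = sets M" and pY: "prob_space Y" "sets Y = sets M"
    and pB: "prob_space Bs" "sets Bs = UNIV"
  shows "emeasure (Bs \<Otimes>\<^sub>M Q \<Otimes>\<^sub>M X \<Otimes>\<^sub>M Y) ({True} \<times> A \<times> space M \<times> space M \<union> {False} \<times> space M \<times> A \<times> space M)
          = emeasure Bs {True} * emeasure Q A + emeasure Bs {False} * emeasure X A"
    and "emeasure (Bs \<Otimes>\<^sub>M Q \<Otimes>\<^sub>M X \<Otimes>\<^sub>M Y) ({True} \<times> A \<times> space M \<times> space M \<union> {False} \<times> space M \<times> space M \<times> A)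
          = emeasure Bs {True} * emeasure Q A + emeasure Bs {False} * emeasure Y A"
    and "emeasure (Bs \<Otimes>\<^sub>M Q \<Otimes>\<^sub>M X \<Otimes>\<^sub>M Y) (UNIV \<times> space M \<times> A \<times> space M) = emeasure X A"
proof -
  note Qp = Q_prob Q_sets
  have sp: "space M \<in> sets M" by simp
  have e1: "emeasure X (space M) = 1" "emeasure Y (space M) = 1" "emeasure Q (space M) = 1"
    using prob_space.emeasure_space_1[OF pX(1)] prob_space.emeasure_space_1[OF pY(1)]
      prob_space.emeasure_space_1[OF Q_prob]
    by (simp_all add: sets_eq_imp_space_eq[OF pX(2)] sets_eq_imp_space_eq[OF pY(2)] sets_eq_imp_space_eq[OF Q_sets])
  have sN: "sets (Bs \<Otimes>\<^sub>M Q \<Otimes>\<^sub>M X \<Otimes>\<^sub>M Y) = sets noise_space" unfolding noise_space_def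
    by (intro sets_pair_measure_cong) (simp_all add: pB pX pY Q_sets)
  have m: "{c} \<times> A1 \<times> A2 \<times> A3 \<in> sets noise_space" if "A1 \<in> sets M" "A2 \<in> sets M" "A3 \<in> sets M" for c A1 A2 A3
    using that unfolding noise_space_def by (intro pair_measureI) auto
  have "emeasure (Bs \<Otimes>\<^sub>M Q \<Otimes>\<^sub>M X \<Otimes>\<^sub>M Y) ({True} \<times> A \<times> space M \<times> space M \<union> {False} \<times> space M \<times> A \<times> space M)
      = emeasure (Bs \<Otimes>\<^sub>M Q \<Otimes>\<^sub>M X \<Otimes>\<^sub>M Y) ({True} \<times> A \<times> space M \<times> space M) + emeasure (Bs \<Otimes>\<^sub>M Q \<Otimes>\<^sub>M X \<Otimes>\<^sub>M Y) ({False} \<times> space M \<times> A \<times> space M)"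
    by (rule plus_emeasure[symmetric]) (auto simp only: sN intro!: m A sp)
  also have "\<dots> = emeasure Bs {True} * emeasure Q A + emeasure Bs {False} * emeasure X A"
    by (simp only: emeasure_pair4_Times[OF pB Qp pX pY A sp sp, of "{True}"] emeasure_pair4_Times[OF pB Qp pX pY sp A sp, of "{False}"] e1 mult_1_right)
  finally show "emeasure (Bs \<Otimes>\<^sub>M Q \<Otimes>\<^sub>M X \<Otimes>\<^sub>M Y) ({True} \<times> A \<times> space M \<times> space M \<union> {False} \<times> space M \<times> A \<times> space M)
          = emeasure Bs {True} * emeasure Q A + emeasure Bs {False} * emeasure X A" .
  have "emeasure (Bs \<Otimes>\<^sub>M Q \<Otimes>\<^sub>M X \<Otimes>\<^sub>M Y) ({True} \<times> A \<times> space M \<times> space M \<union> {False} \<times> space M \<times> space M \<times> A)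
      = emeasure (Bs \<Otimes>\<^sub>M Q \<Otimes>\<^sub>M X \<Otimes>\<^sub>M Y) ({True} \<times> A \<times> space M \<times> space M) + emeasure (Bs \<Otimes>\<^sub>M Q \<Otimes>\<^sub>M X \<Otimes>\<^sub>M Y) ({False} \<times> space M \<times> space M \<times> A)"
    by (rule plus_emeasure[symmetric]) (auto simp only: sN intro!: m A sp)
  also have "\<dots> = emeasure Bs {True} * emeasure Q A + emeasure Bs {False} * emeasure Y A"
    by (simp only: emeasure_pair4_Times[OF pB Qp pX pY A sp sp, of "{True}"] emeasure_pair4_Times[OF pB Qp pX pY sp sp A, of "{False}"] e1 mult_1_right mult_1_left)
  finally show "emeasure (Bs \<Otimes>\<^sub>M Q \<Otimes>\<^sub>M X \<Otimes>\<^sub>M Y) ({True} \<times> A \<times> space M \<times> space M \<union> {False} \<times> space M \<times> space M \<times> A)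
          = emeasure Bs {True} * emeasure Q A + emeasure Bs {False} * emeasure Y A" .
  have eB: "emeasure Bs UNIV = 1"
    using prob_space.emeasure_space_1[OF pB(1)] sets_eq_imp_space_eq[of Bs "count_space UNIV"] pB(2) by simp
  show "emeasure (Bs \<Otimes>\<^sub>M Q \<Otimes>\<^sub>M X \<Otimes>\<^sub>M Y) (UNIV \<times> space M \<times> A \<times> space M) = emeasure X A"
    by (simp only: emeasure_pair4_Times[OF pB Qp pX pY sp A sp, of "UNIV"] e1 eB mult_1_right mult_1_left)
qed

lemma step_in_prob_algebra: "s \<in> space state_space \<Longrightarrow> step s \<in> space (prob_algebra state_space)"
  by (rule measurable_space[OF step_kernel])
lemma sets_step: "s \<in> space state_space \<Longrightarrow> sets (step s) = sets state_space"
  using step_in_prob_algebra by (simp add: space_prob_algebra)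
lemma prob_space_step: "s \<in> space state_space \<Longrightarrow> prob_space (step s)"
  using step_in_prob_algebra by (simp add: space_prob_algebra)

lemma update_measurable': "s \<in> space state_space \<Longrightarrow> update s \<in> noise s \<rightarrow>\<^sub>M state_space"
  using measurable_Pair2[OF update_measurable] by (simp add: measurable_cong_sets[OF sets_noise refl])

lemma state_components: "s \<in> space state_space \<Longrightarrow> st_x s \<in> space M \<and> st_y s \<in> space M \<and> chain_y s \<in> space M"
  by (auto simp: space_state_space st_x_def st_y_def chain_y_def)

lemma noise_factors:
  assumes s: "s \<in> space state_space"
  shows "prob_space (if try_couple s then residual (st_x s) else P (st_x s))" "sets (if try_couple s then residual (st_x s) else P (st_x s)) = sets M"
    "prob_space (if try_couple s then residual (st_y s) else P (st_y s))" "sets (if try_couple s then residual (st_y s) else P (st_y s)) = sets M"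
    "prob_space (if try_couple s then coin else no_coin)" "sets (if try_couple s then coin else no_coin) = UNIV"
  using state_components[OF s] prob_space_residual P_prob coin_facts by auto

lemma P_mixture:
  assumes s: "s \<in> space state_space" and nc: "\<not> st_coupled s" and A: "A \<in> sets M"
  shows "emeasure (if try_couple s then coin else no_coin) {True} * emeasure Q A +
         emeasure (if try_couple s then coin else no_coin) {False} * emeasure (if try_couple s then residual (st_x s) else P (st_x s)) A
         = emeasure (P (st_x s)) A"
    and "emeasure (if try_couple s then coin else no_coin) {True} * emeasure Q A +
         emeasure (if try_couple s then coin else no_coin) {False} * emeasure (if try_couple s then residual (st_y s) else P (st_y s)) A
         = emeasure (P (st_y s)) A"
proof -
  show "emeasure (if try_couple s then coin else no_coin) {True} * emeasure Q A +
         emeasure (if try_couple s then coin else no_coin) {False} * emeasure (if try_couple s then residual (st_x s) else P (st_x s)) A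
         = emeasure (P (st_x s)) A"
  proof (cases "try_couple s")
    case True then have "st_x s \<in> small_set" by (simp add: try_couple_def)
    then show ?thesis using True P_split[OF _ A] coin_facts by simp
  qed (simp add: coin_facts)
  show "emeasure (if try_couple s then coin else no_coin) {True} * emeasure Q A +
         emeasure (if try_couple s then coin else no_coin) {False} * emeasure (if try_couple s then residual (st_y s) else P (st_y s)) A
         = emeasure (P (st_y s)) A"
  proof (cases "try_couple s")
    case True then have "st_y s \<in> small_set" by (simp add: try_couple_def)
    then show ?thesis using True P_split[OF _ A] coin_facts by simp
  qed (simp add: coin_facts)
qed

lemma step_marginal_x: assumes s: "s \<in> space state_space" shows "distr (step s) M st_x = P (st_x s)"
proof -
  have d: "distr (step s) M st_x = distr (noise s) M (st_x \<circ> update s)"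
    unfolding step_def by (rule distr_distr[OF st_x_meas update_measurable'[OF s]])
  have sxs: "st_x s \<in> space M" using state_components[OF s] by simp
  show ?thesis unfolding d
  proof (rule measure_eqI)
    show "sets (distr (noise s) M (st_x \<circ> update s)) = sets (P (st_x s))" using sxs by simp
    fix A assume "A \<in> sets (distr (noise s) M (st_x \<circ> update s))"
    then have A: "A \<in> sets M" by simp
    have As: "A \<subseteq> space M" using A sets.sets_into_space by auto
    have mm: "st_x \<circ> update s \<in> noise s \<rightarrow>\<^sub>M M" using st_x_meas update_measurable'[OF s] by (rule measurable_comp[rotated])
    have sp: "space (noise s) = space noise_space" using sets_noise[OF s] by (rule sets_eq_imp_space_eq)
    have pre: "(st_x \<circ> update s) -` A \<inter> space noise_space =
      (if st_coupled s then UNIV \<times> space M \<times> A \<times> space M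
       else {True} \<times> A \<times> space M \<times> space M \<union> {False} \<times> space M \<times> A \<times> space M)"
      using As by (auto simp: space_noise_space update_def st_x_def split: if_splits)
    show "emeasure (distr (noise s) M (st_x \<circ> update s)) A = emeasure (P (st_x s)) A"
    proof (cases "st_coupled s")
      case True
      then have npc: "\<not> try_couple s" by (simp add: try_couple_def)
      show ?thesis
        unfolding emeasure_distr[OF mm A] sp pre using True npc
          emeasure_noise_union(3)[OF A noise_factors[OF s]] by (simp add: noise_split)
    next
      case False
      show ?thesis
        unfolding emeasure_distr[OF mm A] sp pre using False
          emeasure_noise_union(1)[OF A noise_factors[OF s]] P_mixture(1)[OF s False A] by (simp add: noise_split[symmetric])
    qed
  qed
qed

lemma step_marginal_y: assumes s: "s \<in> space state_space" shows "distr (step s) M chain_y = P (chain_y s)"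
proof -
  have d: "distr (step s) M chain_y = distr (noise s) M (chain_y \<circ> update s)"
    unfolding step_def by (rule distr_distr[OF chain_y_meas update_measurable'[OF s]])
  have sxs: "chain_y s \<in> space M" using state_components[OF s] by simp
  show ?thesis unfolding d
  proof (rule measure_eqI)
    show "sets (distr (noise s) M (chain_y \<circ> update s)) = sets (P (chain_y s))" using sxs by simp
    fix A assume "A \<in> sets (distr (noise s) M (chain_y \<circ> update s))"
    then have A: "A \<in> sets M" by simp
    have As: "A \<subseteq> space M" using A sets.sets_into_space by auto
    have mm: "chain_y \<circ> update s \<in> noise s \<rightarrow>\<^sub>M M" using chain_y_meas update_measurable'[OF s] by (rule measurable_comp[rotated])
    have sp: "space (noise s) = space noise_space" using sets_noise[OF s] by (rule sets_eq_imp_space_eq)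
    have pre: "(chain_y \<circ> update s) -` A \<inter> space noise_space =
      (if st_coupled s then UNIV \<times> space M \<times> A \<times> space M
       else {True} \<times> A \<times> space M \<times> space M \<union> {False} \<times> space M \<times> space M \<times> A)"
      using As by (auto simp: space_noise_space update_def st_x_def chain_y_def st_coupled_def st_y_def split: if_splits)
    show "emeasure (distr (noise s) M (chain_y \<circ> update s)) A = emeasure (P (chain_y s)) A"
    proof (cases "st_coupled s")
      case True
      then have npc: "\<not> try_couple s" by (simp add: try_couple_def)
      show ?thesis
        unfolding emeasure_distr[OF mm A] sp pre using True npc
          emeasure_noise_union(3)[OF A noise_factors[OF s]] by (simp add: noise_split chain_y_def)
    next
      case False
      show ?thesis
        unfolding emeasure_distr[OF mm A] sp pre using False
          emeasure_noise_union(2)[OF A noise_factors[OF s]] P_mixture(2)[OF s False A] by (simp add: noise_split[symmetric] chain_y_def)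
    qed
  qed
qed

definition initial :: "'a \<times> 'a \<Rightarrow> 'a \<times> 'a \<times> nat \<times> bool \<times> bool" where
  "initial z = (fst z, snd z, 0, fst z \<in> R0 \<and> snd z \<in> R0, False)"
definition "init_law = distr (\<nu> \<Otimes>\<^sub>M \<pi>) state_space initial"
definition "coupled n = kstep step n init_law"

lemma sets_pair_init: "sets (\<nu> \<Otimes>\<^sub>M \<pi>) = sets (M \<Otimes>\<^sub>M M)"
  by (intro sets_pair_measure_cong nu_sets pi_sets)

lemma prob_space_pair_init: "prob_space (\<nu> \<Otimes>\<^sub>M \<pi>)"
  by (intro prob_space_pair nu_prob pi_prob)

lemma initial_measurable: "initial \<in> \<nu> \<Otimes>\<^sub>M \<pi> \<rightarrow>\<^sub>M state_space"
  unfolding measurable_cong_sets[OF sets_pair_init refl] initial_def state_space_def by measurable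

lemma init_law_in_prob_algebra: "init_law \<in> space (prob_algebra state_space)"
  unfolding init_law_def space_prob_algebra
  using prob_space.prob_space_distr[OF prob_space_pair_init initial_measurable] by simp

lemma coupled_in_prob_algebra: "coupled n \<in> space (prob_algebra state_space)"
  unfolding coupled_def by (rule kstep_in_prob_algebra[OF step_kernel init_law_in_prob_algebra])

lemma sets_coupled[simp]: "sets (coupled n) = sets state_space" and prob_space_coupled: "prob_space (coupled n)"
  using coupled_in_prob_algebra[of n] by (simp_all add: space_prob_algebra)

lemma coupled_Suc: "coupled (Suc n) = coupled n \<bind> step"
  by (simp add: coupled_def kstep_Suc)

lemma space_coupled: "space (coupled n) = space state_space"
  by (rule sets_eq_imp_space_eq) simp

lemma coupled_not_empty: "space (coupled n) \<noteq> {}"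
  using prob_space.not_empty[OF prob_space_coupled] .

lemma P_subprob: "P \<in> M \<rightarrow>\<^sub>M subprob_algebra M"
  by (rule measurable_prob_algebraD[OF P_kernel])

lemma step_subprob: "step \<in> state_space \<rightarrow>\<^sub>M subprob_algebra state_space"
  by (rule measurable_prob_algebraD[OF step_kernel])

lemma distr_coupled_Suc:
  assumes g: "g \<in> state_space \<rightarrow>\<^sub>M M" and marg: "\<And>s. s \<in> space state_space \<Longrightarrow> distr (step s) M g = P (g s)"
  shows "distr (coupled (Suc n)) M g = distr (coupled n) M g \<bind> P"
proof -
  have gJ: "g \<in> coupled n \<rightarrow>\<^sub>M M" using g by (simp add: measurable_cong_sets[OF sets_coupled refl])
  have KJ: "step \<in> coupled n \<rightarrow>\<^sub>M subprob_algebra state_space" using step_subprob by (simp add: measurable_cong_sets[OF sets_coupled refl])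
  have "distr (coupled (Suc n)) M g = coupled n \<bind> (\<lambda>s. distr (step s) M g)"
    unfolding coupled_Suc by (rule distr_bind[OF KJ coupled_not_empty g])
  also have "\<dots> = coupled n \<bind> (\<lambda>s. P (g s))"
    by (rule bind_cong) (simp_all add: space_coupled marg)
  also have "\<dots> = distr (coupled n) M g \<bind> P"
    by (rule bind_distr[OF gJ P_subprob coupled_not_empty, symmetric])
  finally show ?thesis .
qed

lemma coupled_marginal_x: "distr (coupled n) M st_x = kstep P n \<nu>"
proof (induction n)
  case 0
  have "distr (coupled 0) M st_x = distr (\<nu> \<Otimes>\<^sub>M \<pi>) M (st_x \<circ> initial)"
    by (simp add: coupled_def init_law_def distr_distr[OF st_x_meas initial_measurable])
  also have "\<dots> = distr (\<nu> \<Otimes>\<^sub>M \<pi>) \<nu> fst"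
    by (rule distr_cong) (auto simp: nu_sets st_x_def initial_def)
  also have "\<dots> = \<nu>" by (rule prob_space.distr_pair_fst[OF pi_prob])
  finally show ?case by simp
next
  case (Suc n)
  show ?case using distr_coupled_Suc[OF st_x_meas step_marginal_x] Suc by (simp add: kstep_Suc)
qed

lemma coupled_marginal_y: "distr (coupled n) M chain_y = \<pi>"
proof (induction n)
  case 0
  have "distr (coupled 0) M chain_y = distr (\<nu> \<Otimes>\<^sub>M \<pi>) M (chain_y \<circ> initial)"
    by (simp add: coupled_def init_law_def distr_distr[OF chain_y_meas initial_measurable])
  also have "\<dots> = distr (\<nu> \<Otimes>\<^sub>M \<pi>) \<pi> snd"
    by (rule distr_cong) (auto simp: pi_sets chain_y_def st_y_def st_coupled_def initial_def)
  also have "\<dots> = \<pi>" by (rule distr_pair_snd_prob[OF nu_prob pi_prob])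
  finally show ?case .
next
  case (Suc n)
  show ?case using distr_coupled_Suc[OF chain_y_meas step_marginal_y] Suc by (simp add: pi_stat)
qed

definition "alpha = (1 + d) / (1 + 2 * b + lam * d)"
definition "Lam = 1 + 2 * (lam * d + b)"

lemma d_pos: "0 < d"
proof -
  have "0 \<le> 2 * b / (1 - lam)" using b lam by simp
  then show ?thesis using d by linarith
qed

lemma den_pos: "0 < 1 + 2 * b + lam * d" using b lam d_pos by (simp add: add_pos_nonneg)

lemma alpha_gt1: "1 < alpha"
proof -
  have "2 * b < d * (1 - lam)" using d lam by (simp add: field_simps)
  then have "1 + 2 * b + lam * d < 1 + d" by (simp add: algebra_simps)
  then show ?thesis unfolding alpha_def using den_pos by simp
qed

lemma Lam_ge1: "1 \<le> Lam" unfolding Lam_def using lam b d_pos by simp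

lemma drift_off_small_set:
  assumes sd: "d \<le> t"
  shows "1 + lam * t + 2 * b \<le> (1 + t) / alpha"
proof -
  have "(1 + 2 * b + lam * t) * (1 + d) \<le> (1 + 2 * b + lam * d) * (1 + t)"
  proof -
    have "0 \<le> (1 + 2 * b - lam) * (t - d)" using sd lam b by simp
    then show ?thesis by (simp add: algebra_simps)
  qed
  then show ?thesis unfolding alpha_def using den_pos d_pos sd
    by (simp add: field_simps)
qed

lemma inverse_Lam_power_le:
  assumes "j \<le> n" "j \<le> m"
  shows "1 / Lam ^ m \<le> alpha ^ n / (alpha * Lam) ^ j"
proof -
  have "alpha ^ j \<le> alpha ^ n" using alpha_gt1 assms(1) by (intro power_increasing) auto
  have "Lam ^ j \<le> Lam ^ m" using Lam_ge1 assms(2) by (intro power_increasing) auto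
  have p: "0 < alpha" "0 < Lam" using alpha_gt1 Lam_ge1 by auto
  have "1 / Lam ^ m \<le> 1 / Lam ^ j" using \<open>Lam ^ j \<le> Lam ^ m\<close> p by (simp add: frac_le)
  also have "\<dots> = alpha ^ j / (alpha * Lam) ^ j" using p by (simp add: power_mult_distrib)
  also have "\<dots> \<le> alpha ^ n / (alpha * Lam) ^ j" using \<open>alpha ^ j \<le> alpha ^ n\<close> p
    by (simp add: divide_right_mono)
  finally show ?thesis .
qed

lemma nn_integral_coupled_Suc:
  assumes g: "g \<in> borel_measurable state_space"
  shows "(\<integral>\<^sup>+s. g s \<partial>coupled (Suc n)) = (\<integral>\<^sup>+s. (\<integral>\<^sup>+t. g t \<partial>step s) \<partial>coupled n)"
  unfolding coupled_Suc
  by (rule nn_integral_bind[OF g]) (simp add: measurable_cong_sets[OF sets_coupled refl] step_subprob)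

lemma nn_integral_step: assumes s: "s \<in> space state_space" and g: "g \<in> borel_measurable state_space"
  shows "(\<integral>\<^sup>+t. g t \<partial>step s) = (\<integral>\<^sup>+w. g (update s w) \<partial>noise s)"
  unfolding step_def using g by (simp add: nn_integral_distr[OF update_measurable'[OF s]])

lemma nn_integral_step_mono:
  assumes s: "s \<in> space state_space" and g: "g \<in> borel_measurable state_space" and h: "h \<in> borel_measurable state_space"
    and le: "\<And>w. w \<in> space noise_space \<Longrightarrow> g (update s w) \<le> h (update s w)"
  shows "(\<integral>\<^sup>+t. g t \<partial>step s) \<le> (\<integral>\<^sup>+t. h t \<partial>step s)"
  unfolding nn_integral_step[OF s g] nn_integral_step[OF s h]
  by (rule nn_integral_mono) (use le sets_eq_imp_space_eq[OF sets_noise[OF s]] in auto)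

lemma nn_integral_step_const: "s \<in> space state_space \<Longrightarrow> (\<integral>\<^sup>+t. c \<partial>step s) = c"
  using prob_space.emeasure_space_1[OF prob_space_step] by (simp add: nn_integral_const)

lemma update_in_space: "s \<in> space state_space \<Longrightarrow> w \<in> space noise_space \<Longrightarrow> update s w \<in> space state_space"
  using measurable_space[OF update_measurable'] sets_eq_imp_space_eq[OF sets_noise] by blast

lemma nn_integral_step_weight:
  assumes s: "s \<in> space state_space" and be: "0 \<le> be"
  shows "(\<integral>\<^sup>+t. ennreal (be * (1 + f (st_x t) + f (chain_y t))) \<partial>step s)
     = ennreal be * (1 + (\<integral>\<^sup>+x. ennreal (f x) \<partial>P (st_x s)) + (\<integral>\<^sup>+x. ennreal (f x) \<partial>P (chain_y s)))"
proof -
  have ks: "space (step s) = space state_space" using sets_step[OF s] by (rule sets_eq_imp_space_eq)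
  have "(\<integral>\<^sup>+t. ennreal (be * (1 + f (st_x t) + f (chain_y t))) \<partial>step s)
      = (\<integral>\<^sup>+t. ennreal be * (1 + ennreal (f (st_x t)) + ennreal (f (chain_y t))) \<partial>step s)"
  proof (rule nn_integral_cong)
    fix t assume "t \<in> space (step s)"
    then have "st_x t \<in> space M" "chain_y t \<in> space M" using state_components ks by auto
    then have "0 \<le> f (st_x t)" "0 \<le> f (chain_y t)" using f_nonneg by auto
    then show "ennreal (be * (1 + f (st_x t) + f (chain_y t))) = ennreal be * (1 + ennreal (f (st_x t)) + ennreal (f (chain_y t)))"
      using be by (simp add: ennreal_mult ennreal_1_plus_plus)
  qed
  also have "\<dots> = ennreal be * (\<integral>\<^sup>+t. (1 + ennreal (f (st_x t)) + ennreal (f (chain_y t))) \<partial>step s)"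
    by (rule nn_integral_cmult) (subst measurable_cong_sets[OF sets_step[OF s] refl], measurable)
  also have "(\<integral>\<^sup>+t. (1 + ennreal (f (st_x t)) + ennreal (f (chain_y t))) \<partial>step s)
      = (\<integral>\<^sup>+t. 1 \<partial>step s) + (\<integral>\<^sup>+t. ennreal (f (st_x t)) \<partial>step s) + (\<integral>\<^sup>+t. ennreal (f (chain_y t)) \<partial>step s)"
    by (simp add: nn_integral_add measurable_cong_sets[OF sets_step[OF s] refl] f_meas)
  also have "(\<integral>\<^sup>+t. ennreal (f (st_x t)) \<partial>step s) = (\<integral>\<^sup>+x. ennreal (f x) \<partial>P (st_x s))"
    unfolding step_marginal_x[OF s, symmetric]
    by (rule nn_integral_distr[symmetric]) (simp_all add: measurable_cong_sets[OF sets_step[OF s] refl] f_meas)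
  also have "(\<integral>\<^sup>+t. ennreal (f (chain_y t)) \<partial>step s) = (\<integral>\<^sup>+x. ennreal (f x) \<partial>P (chain_y s))"
    unfolding step_marginal_y[OF s, symmetric]
    by (rule nn_integral_distr[symmetric]) (simp_all add: measurable_cong_sets[OF sets_step[OF s] refl] f_meas)
  finally show ?thesis using nn_integral_step_const[OF s, of 1] by simp
qed

lemma weight_factor_decrease:
  assumes x: "0 \<le> x" and y: "0 \<le> y"
  shows "(if x \<le> d \<and> y \<le> d then alpha ^ Suc n / (alpha * Lam) ^ Suc j else alpha ^ Suc n / (alpha * Lam) ^ j)
           * (1 + (lam * x + b) + (lam * y + b))
         \<le> alpha ^ n / (alpha * Lam) ^ j * (1 + x + y)"
proof -
  have ap: "0 < alpha" "0 < Lam" using alpha_gt1 Lam_ge1 by auto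
  show ?thesis
  proof (cases "x \<le> d \<and> y \<le> d")
    case True
    then have "1 + (lam * x + b) + (lam * y + b) \<le> Lam"
      unfolding Lam_def using lam by (smt (verit) mult_left_mono)
    then have "alpha ^ Suc n / (alpha * Lam) ^ Suc j * (1 + (lam * x + b) + (lam * y + b))
        \<le> alpha ^ Suc n / (alpha * Lam) ^ Suc j * Lam"
      using ap by (intro mult_left_mono) auto
    also have "\<dots> = alpha ^ n / (alpha * Lam) ^ j * 1"
      using ap by (simp add: field_simps)
    also have "\<dots> \<le> alpha ^ n / (alpha * Lam) ^ j * (1 + x + y)"
      using ap x y by (intro mult_left_mono) auto
    finally show ?thesis using True by (simp only: if_P if_True)
  next
    case False
    then have "d \<le> x + y" using x y by auto
    then have "1 + lam * (x + y) + 2 * b \<le> (1 + (x + y)) / alpha"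
      by (rule drift_off_small_set)
    moreover have "1 + (lam * x + b) + (lam * y + b) = 1 + lam * (x + y) + 2 * b"
      by (simp add: algebra_simps)
    ultimately have "1 + (lam * x + b) + (lam * y + b) \<le> (1 + (x + y)) / alpha" by simp
    then have "alpha ^ Suc n / (alpha * Lam) ^ j * (1 + (lam * x + b) + (lam * y + b))
        \<le> alpha ^ Suc n / (alpha * Lam) ^ j * ((1 + (x + y)) / alpha)"
      using ap by (intro mult_left_mono) auto
    also have "\<dots> = alpha ^ n / (alpha * Lam) ^ j * (1 + x + y)"
      using ap by (simp add: field_simps)
    finally show ?thesis using False by (simp only: if_not_P if_False)
  qed
qed

text \<open>Off uncoupled, alive states with fewer than \<open>m\<close> joint visits the weight is the constant
  \<open>\<Lambda>\<^sup>-\<^sup>m\<close>, which never exceeds the main branch while \<open>j \<le> n\<close> (\<open>inverse_Lam_power_le\<close>); since the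
  main branch can only be entered from itself, this keeps \<open>weight m\<close> a supermartingale.\<close>

definition weight :: "nat \<Rightarrow> nat \<Rightarrow> 'a \<times> 'a \<times> nat \<times> bool \<times> bool \<Rightarrow> ennreal" where
  "weight m n s = (if \<not> st_coupled s \<and> st_alive s \<and> st_visits s < m
     then ennreal (alpha ^ n / (alpha * Lam) ^ st_visits s * (1 + f (st_x s) + f (st_y s)))
     else ennreal (1 / Lam ^ m))"

lemma weight_meas[measurable]: "weight m n \<in> borel_measurable state_space"
  unfolding weight_def using f_meas by measurable

lemma weight_ge_floor:
  assumes s: "s \<in> space state_space" and jn: "st_visits s \<le> n"
  shows "ennreal (1 / Lam ^ m) \<le> weight m n s"
proof (cases "\<not> st_coupled s \<and> st_alive s \<and> st_visits s < m")
  case True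
  have "0 \<le> f (st_x s)" "0 \<le> f (st_y s)" using state_components[OF s] f_nonneg by auto
  moreover have "1 / Lam ^ m \<le> alpha ^ n / (alpha * Lam) ^ st_visits s"
    using inverse_Lam_power_le jn True by auto
  moreover have "0 \<le> alpha ^ n / (alpha * Lam) ^ st_visits s" using alpha_gt1 Lam_ge1 by simp
  ultimately have "1 / Lam ^ m * 1 \<le> alpha ^ n / (alpha * Lam) ^ st_visits s * (1 + f (st_x s) + f (st_y s))"
    by (intro mult_mono) auto
  then show ?thesis using True by (simp add: weight_def ennreal_leI)
next
  case False
  then show ?thesis unfolding weight_def by (intro eq_refl if_not_P[symmetric])
qed

lemma weight_le:
  assumes t: "t \<in> space state_space" and c0: "1 / Lam ^ m \<le> be"
    and good: "\<not> st_coupled t \<and> st_alive t \<and> st_visits t < m \<Longrightarrow> alpha ^ N / (alpha * Lam) ^ st_visits t \<le> be"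
  shows "weight m N t \<le> ennreal (be * (1 + f (st_x t) + f (chain_y t)))"
proof -
  have f0: "0 \<le> f (st_x t)" "0 \<le> f (chain_y t)" "0 \<le> f (st_y t)"
    using state_components[OF t] f_nonneg by auto
  have be0: "0 \<le> be" using c0 Lam_ge1 by (smt (verit) divide_nonneg_nonneg zero_le_power)
  show ?thesis
  proof (cases "\<not> st_coupled t \<and> st_alive t \<and> st_visits t < m")
    case True
    then have "chain_y t = st_y t" by (simp add: chain_y_def)
    moreover have "alpha ^ N / (alpha * Lam) ^ st_visits t * (1 + f (st_x t) + f (st_y t))
        \<le> be * (1 + f (st_x t) + f (st_y t))"
      using good[OF True] f0 by (intro mult_right_mono) auto
    moreover have "weight m N t = ennreal (alpha ^ N / (alpha * Lam) ^ st_visits t * (1 + f (st_x t) + f (st_y t)))"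
      unfolding weight_def by (rule if_P[OF True])
    ultimately show ?thesis by (simp add: ennreal_leI)
  next
    case False
    have "1 / Lam ^ m \<le> be * (1 + f (st_x t) + f (chain_y t))"
      using c0 be0 f0 by (smt (verit) mult_left_mono mult_cancel_left1)
    moreover have "weight m N t = ennreal (1 / Lam ^ m)" unfolding weight_def by (rule if_not_P[OF False])
    ultimately show ?thesis by (simp add: ennreal_leI)
  qed
qed

lemma weight_update_floor:
  assumes "\<not> (\<not> st_coupled s \<and> st_alive s \<and> st_visits s < m \<and> st_x s \<in> R0 \<and> st_y s \<in> R0)"
  shows "weight m n (update s w) = ennreal (1 / Lam ^ m)"
proof -
  have "st_visits s \<le> next_visits s" by (simp add: next_visits_def)
  then show ?thesis using assms
    by (cases w) (auto simp: weight_def update_def st_visits_def st_coupled_def st_alive_def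
        next_alive_def chain_y_def)
qed

lemma weight_step:
  assumes s: "s \<in> space state_space" and jn: "st_visits s \<le> n"
  shows "(\<integral>\<^sup>+t. weight m (Suc n) t \<partial>step s) \<le> weight m n s"
proof (cases "\<not> st_coupled s \<and> st_alive s \<and> st_visits s < m \<and> st_x s \<in> R0 \<and> st_y s \<in> R0")
  case False
  then have "(\<integral>\<^sup>+t. weight m (Suc n) t \<partial>step s) = (\<integral>\<^sup>+w. ennreal (1 / Lam ^ m) \<partial>noise s)"
    by (simp add: nn_integral_step[OF s] weight_update_floor)
  also have "\<dots> = (\<integral>\<^sup>+t. ennreal (1 / Lam ^ m) \<partial>step s)"
    by (rule nn_integral_step[OF s, symmetric]) simp
  also have "\<dots> = ennreal (1 / Lam ^ m)" by (rule nn_integral_step_const[OF s])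
  also have "\<dots> \<le> weight m n s" by (rule weight_ge_floor[OF s jn])
  finally show ?thesis .
next
  case good: True
  let ?x = "f (st_x s)" and ?y = "f (st_y s)" and ?j = "st_visits s"
  have fx: "0 \<le> ?x" "0 \<le> ?y" using state_components[OF s] f_nonneg by auto
  have chain_y: "chain_y s = st_y s" using good by (simp add: chain_y_def)
  define be where "be = (if ?x \<le> d \<and> ?y \<le> d then alpha ^ Suc n / (alpha * Lam) ^ Suc ?j
                         else alpha ^ Suc n / (alpha * Lam) ^ ?j)"
  have next_visits: "next_visits s = (if ?x \<le> d \<and> ?y \<le> d then Suc ?j else ?j)"
    using good state_components[OF s] by (simp add: next_visits_def chain_y small_set_def)
  have "1 / Lam ^ m \<le> alpha ^ Suc n / (alpha * Lam) ^ Suc ?j"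
    "1 / Lam ^ m \<le> alpha ^ Suc n / (alpha * Lam) ^ ?j"
    using jn good by (intro inverse_Lam_power_le; simp)+
  then have be_floor: "1 / Lam ^ m \<le> be" unfolding be_def by simp
  have be0: "0 \<le> be" unfolding be_def using alpha_gt1 Lam_ge1 by simp
  have "(\<integral>\<^sup>+t. weight m (Suc n) t \<partial>step s) \<le> (\<integral>\<^sup>+t. ennreal (be * (1 + f (st_x t) + f (chain_y t))) \<partial>step s)"
  proof (rule nn_integral_step_mono[OF s weight_meas])
    fix w assume w: "w \<in> space noise_space"
    show "weight m (Suc n) (update s w) \<le> ennreal (be * (1 + f (st_x (update s w)) + f (chain_y (update s w))))"
    proof (rule weight_le[OF update_in_space[OF s w] be_floor])
      assume "\<not> st_coupled (update s w) \<and> st_alive (update s w) \<and> st_visits (update s w) < m"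
      then have "st_visits (update s w) = next_visits s"
        using good by (cases w) (auto simp: update_def st_coupled_def st_visits_def)
      then show "alpha ^ Suc n / (alpha * Lam) ^ st_visits (update s w) \<le> be"
        by (simp add: be_def next_visits)
    qed
  qed (use f_meas in measurable)
  also have "\<dots> = ennreal be * (1 + (\<integral>\<^sup>+x. ennreal (f x) \<partial>P (st_x s)) + (\<integral>\<^sup>+x. ennreal (f x) \<partial>P (st_y s)))"
    using nn_integral_step_weight[OF s be0] by (simp add: chain_y)
  also have "\<dots> \<le> ennreal be * (1 + ennreal (lam * ?x + b) + ennreal (lam * ?y + b))"
    using drift good by (intro mult_left_mono add_mono) auto
  also have "\<dots> = ennreal (be * (1 + (lam * ?x + b) + (lam * ?y + b)))"
  proof -
    have u: "0 \<le> lam * ?x + b" "0 \<le> lam * ?y + b" using fx lam b by auto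
    then have sum: "0 \<le> 1 + (lam * ?x + b) + (lam * ?y + b)" by simp
    show ?thesis unfolding ennreal_mult[OF be0 sum] ennreal_1_plus_plus[OF u] ..
  qed
  also have "\<dots> \<le> weight m n s"
    using weight_factor_decrease[OF fx, of n ?j] good by (simp add: weight_def be_def ennreal_leI)
  finally show ?thesis .
qed

lemma visits_update_le: "st_visits (update s w) \<le> Suc (st_visits s)"
  by (cases w) (auto simp: update_def st_visits_def next_visits_def)

definition "visits_exceed n s = (if n < st_visits s then 1 else 0 :: ennreal)"

lemma visits_exceed_meas[measurable]: "visits_exceed n \<in> borel_measurable state_space" unfolding visits_exceed_def by measurable

lemma visits_exceed_zero: "(\<integral>\<^sup>+s. visits_exceed n s \<partial>coupled n) = 0"
proof (induction n)
  case 0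
  have "(\<integral>\<^sup>+s. visits_exceed 0 s \<partial>coupled 0) = (\<integral>\<^sup>+z. visits_exceed 0 (initial z) \<partial>(\<nu> \<Otimes>\<^sub>M \<pi>))"
    by (simp add: coupled_def init_law_def nn_integral_distr[OF initial_measurable])
  also have "\<dots> = 0" by (simp add: visits_exceed_def initial_def st_visits_def)
  finally show ?case .
next
  case (Suc n)
  have "(\<integral>\<^sup>+s. visits_exceed (Suc n) s \<partial>coupled (Suc n)) = (\<integral>\<^sup>+s. (\<integral>\<^sup>+t. visits_exceed (Suc n) t \<partial>step s) \<partial>coupled n)"
    by (rule nn_integral_coupled_Suc) simp
  also have "\<dots> \<le> (\<integral>\<^sup>+s. visits_exceed n s \<partial>coupled n)"
  proof (rule nn_integral_mono)
    fix s assume "s \<in> space (coupled n)"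
    then have s: "s \<in> space state_space" by (simp add: space_coupled)
    have "(\<integral>\<^sup>+t. visits_exceed (Suc n) t \<partial>step s) \<le> (\<integral>\<^sup>+t. visits_exceed n s \<partial>step s)"
    proof (rule nn_integral_step_mono[OF s])
      fix w assume w: "w \<in> space noise_space"
      show "visits_exceed (Suc n) (update s w) \<le> visits_exceed n s" using visits_update_le[of s w] by (simp add: visits_exceed_def)
    qed simp_all
    also have "\<dots> = visits_exceed n s" by (rule nn_integral_step_const[OF s])
    finally show "(\<integral>\<^sup>+t. visits_exceed (Suc n) t \<partial>step s) \<le> visits_exceed n s" .
  qed
  finally show ?case using Suc by simp
qed

lemma AE_visits_le: "AE s in coupled n. st_visits s \<le> n"
proof -
  have "AE s in coupled n. visits_exceed n s = 0"
    using visits_exceed_zero[of n] by (subst (asm) nn_integral_0_iff_AE) (simp_all add: measurable_cong_sets[OF sets_coupled refl])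
  then show ?thesis by eventually_elim (auto simp: visits_exceed_def split: if_splits)
qed

lemma weight_chain_step: "(\<integral>\<^sup>+s. weight m (Suc n) s \<partial>coupled (Suc n)) \<le> (\<integral>\<^sup>+s. weight m n s \<partial>coupled n)"
proof -
  have "(\<integral>\<^sup>+s. weight m (Suc n) s \<partial>coupled (Suc n)) = (\<integral>\<^sup>+s. (\<integral>\<^sup>+t. weight m (Suc n) t \<partial>step s) \<partial>coupled n)"
    by (rule nn_integral_coupled_Suc) simp
  also have "\<dots> \<le> (\<integral>\<^sup>+s. weight m n s \<partial>coupled n)"
  proof (rule nn_integral_mono_AE)
    show "AE s in coupled n. (\<integral>\<^sup>+t. weight m (Suc n) t \<partial>step s) \<le> weight m n s"
      using AE_visits_le[of n] AE_space[of "coupled n"]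
      by eventually_elim (auto simp: space_coupled intro!: weight_step)
  qed
  finally show ?thesis .
qed

lemma weight_chain: "(\<integral>\<^sup>+s. weight m n s \<partial>coupled n) \<le> (\<integral>\<^sup>+s. weight m 0 s \<partial>coupled 0)"
  by (induction n) (auto intro: order_trans[OF weight_chain_step])

lemma weight_initial_le:
  assumes m: "0 < m" and xy: "x \<in> space M" "y \<in> space M"
  shows "weight m 0 (initial (x, y)) \<le> 1 + ennreal (f x) + indicator R0 y * ennreal (f y)"
proof (cases "x \<in> R0 \<and> y \<in> R0")
  case True
  have "weight m 0 (initial (x, y)) = ennreal (1 + f x + f y)"
    using True m unfolding weight_def initial_def st_coupled_def st_alive_def st_visits_def st_x_def st_y_def
    by simp
  then show ?thesis using True xy f_nonneg by (simp add: ennreal_1_plus_plus)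
next
  case False
  have "1 / Lam ^ m \<le> 1" using Lam_ge1 by (simp add: divide_le_eq_1 one_le_power)
  then have "weight m 0 (initial (x, y)) \<le> 1"
    using False unfolding weight_def initial_def st_coupled_def st_alive_def st_visits_def
    by (auto simp: ennreal_le_1)
  also have "(1::ennreal) \<le> 1 + ennreal (f x) + indicator R0 y * ennreal (f y)"
    by (intro add_increasing2) auto
  finally show ?thesis .
qed

lemma weight_init:
  assumes m: "0 < m"
  shows "(\<integral>\<^sup>+s. weight m 0 s \<partial>coupled 0) \<le> 1 + (\<integral>\<^sup>+x. ennreal (f x) \<partial>\<nu>) + ennreal (b / (1 - lam))"
proof -
  let ?NP = "\<nu> \<Otimes>\<^sub>M \<pi>"
  have space_NP: "space ?NP = space M \<times> space M"
    using sets_eq_imp_space_eq[OF sets_pair_init] space_pair_measure[of M M] by simp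
  have fst_meas: "(\<lambda>z. ennreal (f (fst z))) \<in> borel_measurable ?NP"
    by (subst measurable_cong_sets[OF sets_pair_init refl]) measurable
  have snd_meas: "(\<lambda>z. indicator R0 (snd z) * ennreal (f (snd z))) \<in> borel_measurable ?NP"
    by (subst measurable_cong_sets[OF sets_pair_init refl]) measurable
  have "(\<integral>\<^sup>+s. weight m 0 s \<partial>coupled 0) = (\<integral>\<^sup>+z. weight m 0 (initial z) \<partial>?NP)"
    unfolding coupled_def kstep_0 init_law_def
    by (rule nn_integral_distr[OF initial_measurable]) (simp add: weight_meas)
  also have "\<dots> \<le> (\<integral>\<^sup>+z. 1 + ennreal (f (fst z)) + indicator R0 (snd z) * ennreal (f (snd z)) \<partial>?NP)"
    using weight_initial_le[OF m] by (intro nn_integral_mono) (auto simp: space_NP)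
  also have "\<dots> = 1 + (\<integral>\<^sup>+z. ennreal (f (fst z)) \<partial>?NP) + (\<integral>\<^sup>+z. indicator R0 (snd z) * ennreal (f (snd z)) \<partial>?NP)"
    using fst_meas snd_meas prob_space.emeasure_space_1[OF prob_space_pair_init]
    by (simp add: nn_integral_add)
  also have "(\<integral>\<^sup>+z. ennreal (f (fst z)) \<partial>?NP) = (\<integral>\<^sup>+x. ennreal (f x) \<partial>\<nu>)"
    using f_meas by (intro nn_integral_pair_fst_prob pi_prob) (simp add: measurable_cong_sets[OF nu_sets refl])
  also have "(\<integral>\<^sup>+z. indicator R0 (snd z) * ennreal (f (snd z)) \<partial>?NP) = (\<integral>\<^sup>+x\<in>R0. ennreal (f x) \<partial>\<pi>)"
    using f_meas R0_meas
    by (subst nn_integral_pair_snd_prob[OF nu_prob pi_prob])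
      (simp_all add: mult.commute measurable_cong_sets[OF pi_sets refl])
  finally show ?thesis using R0_integral by (simp add: add_left_mono order_trans)
qed

text \<open>Each joint visit fails to couple with probability \<open>1 - \<epsilon>\<close>, so \<open>(1 - \<epsilon>)\<^sup>-\<^sup>j\<close> on uncoupled
  states is a supermartingale.\<close>

definition coin_weight :: "'a \<times> 'a \<times> nat \<times> bool \<times> bool \<Rightarrow> ennreal" where
  "coin_weight s = (if st_coupled s then 0 else inverse (ennreal (1 - \<epsilon>)) ^ st_visits s)"

lemma coin_weight_meas[measurable]: "coin_weight \<in> borel_measurable state_space"
proof -
  have g: "(\<lambda>n::nat. inverse (ennreal (1 - \<epsilon>)) ^ n) \<in> count_space UNIV \<rightarrow>\<^sub>M borel" by simp
  have "(\<lambda>s. inverse (ennreal (1 - \<epsilon>)) ^ st_visits s) \<in> borel_measurable state_space"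
    by (rule measurable_compose[OF st_visits_meas g])
  moreover have "{s \<in> space state_space. st_coupled s} \<in> sets state_space" by simp
  ultimately show ?thesis unfolding coin_weight_def by (intro measurable_If) auto
qed

lemma inverse_power_step: "ennreal (1 - \<epsilon>) * inverse (ennreal (1 - \<epsilon>)) ^ Suc j \<le> inverse (ennreal (1 - \<epsilon>)) ^ j"
proof (cases "\<epsilon> = 1")
  case True then show ?thesis by simp
next
  case False
  then have t: "0 < 1 - \<epsilon>" using eps by simp
  have "ennreal (1 - \<epsilon>) * inverse (ennreal (1 - \<epsilon>)) ^ Suc j = ennreal ((1 - \<epsilon>) * inverse (1 - \<epsilon>) ^ Suc j)"
    using t by (simp add: inverse_ennreal ennreal_mult ennreal_power)
  also have "(1 - \<epsilon>) * inverse (1 - \<epsilon>) ^ Suc j = inverse (1 - \<epsilon>) ^ j"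
    using t by (simp add: field_simps)
  also have "ennreal (inverse (1 - \<epsilon>) ^ j) = inverse (ennreal (1 - \<epsilon>)) ^ j"
    using t by (simp add: inverse_ennreal ennreal_power)
  finally show ?thesis by simp
qed

lemma coin_weight_step: assumes s: "s \<in> space state_space" shows "(\<integral>\<^sup>+t. coin_weight t \<partial>step s) \<le> coin_weight s"
proof -
  have update_eq: "update s w = (if st_coupled s then (fst (snd (snd w)), fst (snd (snd w)), next_visits s, next_alive s, True)
     else if fst w then (fst (snd w), fst (snd w), next_visits s, next_alive s, True)
     else (fst (snd (snd w)), snd (snd (snd w)), next_visits s, next_alive s, False))" for w
    by (cases w) (auto simp: update_def)
  show ?thesis
  proof (cases "st_coupled s")
    case True
    have "(\<integral>\<^sup>+t. coin_weight t \<partial>step s) \<le> (\<integral>\<^sup>+t. 0 \<partial>step s)"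
    proof (rule nn_integral_step_mono[OF s coin_weight_meas])
      fix w show "coin_weight (update s w) \<le> 0" using True by (cases w) (simp add: coin_weight_def update_def st_coupled_def)
    qed simp
    then show ?thesis by simp
  next
    case nc: False
    show ?thesis
    proof (cases "try_couple s")
      case False
      have njs: "next_visits s = st_visits s" using nc False by (simp add: next_visits_def try_couple_def chain_y_def)
      have "(\<integral>\<^sup>+t. coin_weight t \<partial>step s) \<le> (\<integral>\<^sup>+t. coin_weight s \<partial>step s)"
      proof (rule nn_integral_step_mono[OF s coin_weight_meas])
        fix w show "coin_weight (update s w) \<le> coin_weight s" using nc by (cases w) (simp add: coin_weight_def update_def st_coupled_def st_visits_def njs)
      qed simp
      then show ?thesis using nn_integral_step_const[OF s] by simp
    next
      case True
      then have rr: "st_x s \<in> small_set" "st_y s \<in> small_set" by (auto simp: try_couple_def)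
      have njs: "next_visits s = Suc (st_visits s)" using nc True by (simp add: next_visits_def try_couple_def chain_y_def)
      let ?c = "inverse (ennreal (1 - \<epsilon>)) ^ Suc (st_visits s)"
      let ?F = "{False} \<times> space M \<times> space M \<times> space M"
      have spN: "space (noise s) = space noise_space" using sets_noise[OF s] by (rule sets_eq_imp_space_eq)
      have "(\<integral>\<^sup>+t. coin_weight t \<partial>step s) = (\<integral>\<^sup>+w. coin_weight (update s w) \<partial>noise s)" by (rule nn_integral_step[OF s coin_weight_meas])
      also have "\<dots> = (\<integral>\<^sup>+w. ?c * indicator ?F w \<partial>noise s)"
        by (rule nn_integral_cong) (use nc[unfolded st_coupled_def] in \<open>auto simp: spN space_noise_space coin_weight_def update_eq st_coupled_def st_visits_def njs split: split_indicator\<close>)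
      also have "\<dots> = ?c * emeasure (noise s) ?F"
        by (rule nn_integral_cmult_indicator) (simp add: sets_noise[OF s] noise_space_def)
      also have "emeasure (noise s) ?F = ennreal (1 - \<epsilon>)"
      proof -
        have N: "noise s = coin \<Otimes>\<^sub>M Q \<Otimes>\<^sub>M residual (st_x s) \<Otimes>\<^sub>M residual (st_y s)" using True by (simp add: noise_def)
        have xs: "st_x s \<in> space M" "st_y s \<in> space M" using rr by (auto simp: small_set_def)
        have sp: "space M \<in> sets M" by simp
        have e1: "emeasure (residual (st_x s)) (space M) = 1" "emeasure (residual (st_y s)) (space M) = 1" "emeasure Q (space M) = 1"
          using prob_space.emeasure_space_1[OF prob_space_residual[OF xs(1)]] prob_space.emeasure_space_1[OF prob_space_residual[OF xs(2)]]
            prob_space.emeasure_space_1[OF Q_prob]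
          by (simp_all add: sets_eq_imp_space_eq[OF sets_residual[OF xs(1)]] sets_eq_imp_space_eq[OF sets_residual[OF xs(2)]] sets_eq_imp_space_eq[OF Q_sets])
        show ?thesis unfolding N
          using emeasure_pair4_Times[OF coin_facts(1,2) Q_prob Q_sets prob_space_residual[OF xs(1)] sets_residual[OF xs(1)] prob_space_residual[OF xs(2)] sets_residual[OF xs(2)] sp sp sp, of "{False}"]
          by (simp only: e1 coin_facts mult_1_right)
      qed
      also have "?c * ennreal (1 - \<epsilon>) \<le> coin_weight s"
        using inverse_power_step[of "st_visits s"] nc by (simp add: coin_weight_def mult.commute)
      finally show ?thesis by simp
    qed
  qed
qed

lemma coin_weight_chain: "(\<integral>\<^sup>+s. coin_weight s \<partial>coupled n) \<le> 1"
proof (induction n)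
  case 0
  have "(\<integral>\<^sup>+s. coin_weight s \<partial>coupled 0) = (\<integral>\<^sup>+z. coin_weight (initial z) \<partial>(\<nu> \<Otimes>\<^sub>M \<pi>))"
    unfolding coupled_def kstep_0 init_law_def by (rule nn_integral_distr[OF initial_measurable]) (simp add: coin_weight_meas)
  also have "\<dots> = (\<integral>\<^sup>+z. 1 \<partial>(\<nu> \<Otimes>\<^sub>M \<pi>))"
    by (simp add: coin_weight_def initial_def st_coupled_def st_visits_def)
  also have "\<dots> = 1" using prob_space.emeasure_space_1[OF prob_space_pair_init] by simp
  finally show ?case by simp
next
  case (Suc n)
  have "(\<integral>\<^sup>+s. coin_weight s \<partial>coupled (Suc n)) = (\<integral>\<^sup>+s. (\<integral>\<^sup>+t. coin_weight t \<partial>step s) \<partial>coupled n)"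
    by (rule nn_integral_coupled_Suc) simp
  also have "\<dots> \<le> (\<integral>\<^sup>+s. coin_weight s \<partial>coupled n)"
    by (rule nn_integral_mono) (simp add: space_coupled coin_weight_step)
  finally show ?case using Suc by simp
qed

definition "dead s = (if st_alive s then 0 else 1 :: ennreal)"
definition "escaped s = (if st_x s \<in> R0 \<and> chain_y s \<in> R0 then 0 else 1 :: ennreal)"
definition "dead_inside s = (if \<not> st_alive s \<and> st_x s \<in> R0 \<and> chain_y s \<in> R0 then 1 else 0 :: ennreal)"

lemma dead_escaped_meas[measurable]: "dead \<in> borel_measurable state_space" "escaped \<in> borel_measurable state_space" "dead_inside \<in> borel_measurable state_space"
proof -
  have a: "{s \<in> space state_space. st_alive s} \<in> sets state_space" "{s \<in> space state_space. st_x s \<in> R0 \<and> chain_y s \<in> R0} \<in> sets state_space"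
    "{s \<in> space state_space. \<not> st_alive s \<and> st_x s \<in> R0 \<and> chain_y s \<in> R0} \<in> sets state_space" by simp_all
  show "dead \<in> borel_measurable state_space" unfolding dead_def by (intro measurable_If a) auto
  show "escaped \<in> borel_measurable state_space" unfolding escaped_def by (intro measurable_If a) auto
  show "dead_inside \<in> borel_measurable state_space" unfolding dead_inside_def by (intro measurable_If a) auto
qed

lemma dead_step: assumes s: "s \<in> space state_space" shows "(\<integral>\<^sup>+t. dead t \<partial>step s) \<le> escaped s + dead_inside s"
proof -
  have "(\<integral>\<^sup>+t. dead t \<partial>step s) \<le> (\<integral>\<^sup>+t. (escaped s + dead_inside s) \<partial>step s)"
  proof (rule nn_integral_step_mono[OF s])
    fix w
    have "st_alive (update s w) = next_alive s" by (cases w) (auto simp: update_def st_alive_def)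
    then show "dead (update s w) \<le> escaped s + dead_inside s" by (auto simp: dead_def escaped_def dead_inside_def next_alive_def)
  qed simp_all
  then show ?thesis using nn_integral_step_const[OF s] by simp
qed

lemma dead_inside_init: "(\<integral>\<^sup>+s. dead_inside s \<partial>coupled 0) = 0"
proof -
  have "(\<integral>\<^sup>+s. dead_inside s \<partial>coupled 0) = (\<integral>\<^sup>+z. dead_inside (initial z) \<partial>(\<nu> \<Otimes>\<^sub>M \<pi>))"
    unfolding coupled_def kstep_0 init_law_def by (rule nn_integral_distr[OF initial_measurable]) (simp add: dead_escaped_meas)
  also have "(\<lambda>z. dead_inside (initial z)) = (\<lambda>z. 0)" by (auto simp: dead_inside_def initial_def st_alive_def st_x_def st_y_def chain_y_def st_coupled_def)
  finally show ?thesis by simp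
qed

lemma dead_Suc: "(\<integral>\<^sup>+s. dead s \<partial>coupled (Suc n)) \<le> (\<integral>\<^sup>+s. escaped s \<partial>coupled n) + (\<integral>\<^sup>+s. dead_inside s \<partial>coupled n)"
proof -
  have "(\<integral>\<^sup>+s. dead s \<partial>coupled (Suc n)) = (\<integral>\<^sup>+s. (\<integral>\<^sup>+t. dead t \<partial>step s) \<partial>coupled n)"
    by (rule nn_integral_coupled_Suc) simp
  also have "\<dots> \<le> (\<integral>\<^sup>+s. (escaped s + dead_inside s) \<partial>coupled n)"
    by (rule nn_integral_mono) (simp add: space_coupled dead_step)
  also have "\<dots> = (\<integral>\<^sup>+s. escaped s \<partial>coupled n) + (\<integral>\<^sup>+s. dead_inside s \<partial>coupled n)"
    by (rule nn_integral_add) (simp_all add: measurable_cong_sets[OF sets_coupled refl])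
  finally show ?thesis .
qed

lemma dead_chain: "(\<integral>\<^sup>+s. dead s \<partial>coupled (Suc n)) \<le> (\<Sum>i\<le>n. (\<integral>\<^sup>+s. escaped s \<partial>coupled i))"
proof (induction n)
  case 0 then show ?case using dead_Suc[of 0] dead_inside_init by simp
next
  case (Suc n)
  have "(\<integral>\<^sup>+s. dead_inside s \<partial>coupled (Suc n)) \<le> (\<integral>\<^sup>+s. dead s \<partial>coupled (Suc n))"
    by (rule nn_integral_mono) (simp add: dead_inside_def dead_def)
  then have "(\<integral>\<^sup>+s. dead s \<partial>coupled (Suc (Suc n))) \<le> (\<integral>\<^sup>+s. escaped s \<partial>coupled (Suc n)) + (\<Sum>i\<le>n. (\<integral>\<^sup>+s. escaped s \<partial>coupled i))"
    using dead_Suc[of "Suc n"] Suc by (meson add_left_mono order_trans)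
  then show ?case by (simp add: add.commute)
qed

lemma prob_space_kstep_P: "prob_space (kstep P n \<nu>)"
proof -
  have "kstep P n \<nu> \<in> space (prob_algebra M)"
    by (rule kstep_in_prob_algebra[OF P_kernel]) (simp add: space_prob_algebra nu_sets nu_prob)
  then show ?thesis by (simp add: space_prob_algebra)
qed

lemma measure_chain_x: "B \<in> sets M \<Longrightarrow> measure (kstep P n \<nu>) B = measure (coupled n) (st_x -` B \<inter> space state_space)"
  using coupled_marginal_x[of n] measure_distr[of st_x "coupled n" M B] by (simp add: measurable_cong_sets[OF sets_coupled refl] space_coupled)

lemma measure_chain_y: "B \<in> sets M \<Longrightarrow> measure \<pi> B = measure (coupled n) (chain_y -` B \<inter> space state_space)"
  using coupled_marginal_y[of n] measure_distr[of chain_y "coupled n" M B] by (simp add: measurable_cong_sets[OF sets_coupled refl] space_coupled)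

lemma emeasure_chain_x: "B \<in> sets M \<Longrightarrow> emeasure (kstep P n \<nu>) B = emeasure (coupled n) (st_x -` B \<inter> space state_space)"
  using coupled_marginal_x[of n] emeasure_distr[of st_x "coupled n" M B] by (simp add: measurable_cong_sets[OF sets_coupled refl] space_coupled)

lemma emeasure_chain_y: "B \<in> sets M \<Longrightarrow> emeasure \<pi> B = emeasure (coupled n) (chain_y -` B \<inter> space state_space)"
  using coupled_marginal_y[of n] emeasure_distr[of chain_y "coupled n" M B] by (simp add: measurable_cong_sets[OF sets_coupled refl] space_coupled)

definition "uncoupled = {s \<in> space state_space. \<not> st_coupled s}"

lemma uncoupled_meas[measurable]: "uncoupled \<in> sets state_space" unfolding uncoupled_def by simp

lemma diff_le_uncoupled: assumes B: "B \<in> sets M"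
  shows "\<bar>measure (kstep P n \<nu>) B - measure \<pi> B\<bar> \<le> measure (coupled n) uncoupled"
proof -
  interpret Jn: prob_space "coupled n" by (rule prob_space_coupled)
  define X1 where "X1 = st_x -` B \<inter> space state_space"
  define Y1 where "Y1 = chain_y -` B \<inter> space state_space"
  have X1m: "X1 \<in> sets state_space" unfolding X1_def using B by measurable
  have Y1m: "Y1 \<in> sets state_space" unfolding Y1_def using B by measurable
  have eqd: "X1 - uncoupled = Y1 - uncoupled" unfolding X1_def Y1_def uncoupled_def by (auto simp: chain_y_def)
  have "measure (coupled n) (X1 - uncoupled) = measure (coupled n) X1 - measure (coupled n) (X1 \<inter> uncoupled)"
    by (rule Jn.finite_measure_Diff') (simp_all add: X1m)
  moreover have "measure (coupled n) (Y1 - uncoupled) = measure (coupled n) Y1 - measure (coupled n) (Y1 \<inter> uncoupled)"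
    by (rule Jn.finite_measure_Diff') (simp_all add: Y1m)
  moreover have "measure (coupled n) (X1 \<inter> uncoupled) \<le> measure (coupled n) uncoupled"
    by (rule Jn.finite_measure_mono) auto
  moreover have "measure (coupled n) (Y1 \<inter> uncoupled) \<le> measure (coupled n) uncoupled"
    by (rule Jn.finite_measure_mono) auto
  moreover have "0 \<le> measure (coupled n) (X1 \<inter> uncoupled)" "0 \<le> measure (coupled n) (Y1 \<inter> uncoupled)" by simp_all
  moreover have "measure (kstep P n \<nu>) B = measure (coupled n) X1" unfolding X1_def by (rule measure_chain_x[OF B])
  moreover have "measure \<pi> B = measure (coupled n) Y1" unfolding Y1_def by (rule measure_chain_y[OF B])
  ultimately show ?thesis using eqd by (smt (verit))
qed

lemma tv_le_uncoupled: "tv_dist M (kstep P n \<nu>) \<pi> \<le> measure (coupled n) uncoupled"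
  unfolding tv_dist_def
  by (rule cSUP_least) (auto intro: diff_le_uncoupled)

definition "few_visits m = {s \<in> space state_space. \<not> st_coupled s \<and> st_alive s \<and> st_visits s < m}"
definition "many_visits m = {s \<in> space state_space. \<not> st_coupled s \<and> m \<le> st_visits s}"
definition "dead_set = {s \<in> space state_space. \<not> st_alive s}"

lemma visit_sets_meas[measurable]: "few_visits m \<in> sets state_space" "many_visits m \<in> sets state_space" "dead_set \<in> sets state_space"
  unfolding few_visits_def many_visits_def dead_set_def by simp_all

lemma uncoupled_split: "measure (coupled n) uncoupled \<le> measure (coupled n) (few_visits m) + measure (coupled n) (many_visits m) + measure (coupled n) dead_set"
proof -
  interpret Jn: prob_space "coupled n" by (rule prob_space_coupled)
  have "uncoupled \<subseteq> few_visits m \<union> many_visits m \<union> dead_set" by (auto simp: uncoupled_def few_visits_def many_visits_def dead_set_def)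
  then have "measure (coupled n) uncoupled \<le> measure (coupled n) (few_visits m \<union> many_visits m \<union> dead_set)"
    by (intro Jn.finite_measure_mono) simp_all
  also have "\<dots> \<le> measure (coupled n) (few_visits m \<union> many_visits m) + measure (coupled n) dead_set"
    by (rule measure_subadditive) (simp_all add: Jn.emeasure_eq_measure)
  also have "measure (coupled n) (few_visits m \<union> many_visits m) \<le> measure (coupled n) (few_visits m) + measure (coupled n) (many_visits m)"
    by (rule measure_subadditive) (simp_all add: Jn.emeasure_eq_measure)
  finally show ?thesis by simp
qed

lemma coin_weight_ge_many_visits:
  "inverse (ennreal (1 - \<epsilon>)) ^ m * indicator (many_visits m) s \<le> coin_weight s"
proof (cases "s \<in> many_visits m")
  case True
  have "1 \<le> inverse (ennreal (1 - \<epsilon>))"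
    using eps by (cases "\<epsilon> = 1") (simp_all add: inverse_ennreal one_le_inverse flip: ennreal_1)
  then have "inverse (ennreal (1 - \<epsilon>)) ^ m \<le> inverse (ennreal (1 - \<epsilon>)) ^ st_visits s"
    using True by (intro power_increasing) (auto simp: many_visits_def)
  then show ?thesis using True by (simp add: coin_weight_def many_visits_def)
qed simp

lemma many_visits_bound:
  assumes m: "0 < m"
  shows "measure (coupled n) (many_visits m) \<le> (1 - \<epsilon>) ^ m"
proof -
  interpret J: prob_space "coupled n" by (rule prob_space_coupled)
  have "inverse (ennreal (1 - \<epsilon>)) ^ m * emeasure (coupled n) (many_visits m)
      = (\<integral>\<^sup>+s. inverse (ennreal (1 - \<epsilon>)) ^ m * indicator (many_visits m) s \<partial>coupled n)"
    by (simp add: nn_integral_cmult_indicator many_visits_def)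
  also have "\<dots> \<le> (\<integral>\<^sup>+s. coin_weight s \<partial>coupled n)"
    by (intro nn_integral_mono coin_weight_ge_many_visits)
  also have "\<dots> \<le> 1" by (rule coin_weight_chain)
  finally have "emeasure (coupled n) (many_visits m) \<le> ennreal ((1 - \<epsilon>) ^ m)"
    using eps m by (intro le_power_if_inverse_power_mult_le_1) auto
  then show ?thesis using eps by (simp add: J.emeasure_eq_measure)
qed

lemma weight_ge_few_visits:
  assumes s: "s \<in> space state_space" and mk: "m \<le> k"
  shows "ennreal (1 / Lam ^ m) + ennreal (alpha ^ k / (alpha * Lam) ^ m - 1 / Lam ^ m) * indicator (few_visits m) s
    \<le> weight m k s"
proof (cases "s \<in> few_visits m")
  case True
  then have good: "\<not> st_coupled s" "st_alive s" "st_visits s < m" by (auto simp: few_visits_def)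
  have "1 * 1 \<le> alpha * Lam" using alpha_gt1 Lam_ge1 by (intro mult_mono) auto
  then have ap: "0 < alpha" "1 \<le> alpha * Lam" using alpha_gt1 by auto
  have "1 / Lam ^ m \<le> alpha ^ k / (alpha * Lam) ^ m" using mk by (intro inverse_Lam_power_le) auto
  then have "ennreal (1 / Lam ^ m) + ennreal (alpha ^ k / (alpha * Lam) ^ m - 1 / Lam ^ m)
      = ennreal (alpha ^ k / (alpha * Lam) ^ m)"
    using Lam_ge1 by (subst ennreal_plus[symmetric]) auto
  also have "alpha ^ k / (alpha * Lam) ^ m \<le> alpha ^ k / (alpha * Lam) ^ st_visits s * 1"
    using ap good by (auto intro!: divide_left_mono power_increasing)
  also have "\<dots> \<le> alpha ^ k / (alpha * Lam) ^ st_visits s * (1 + f (st_x s) + f (st_y s))"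
    using state_components[OF s] f_nonneg ap by (intro mult_left_mono) auto
  finally show ?thesis using True good by (simp add: weight_def ennreal_leI)
next
  case False
  then have "\<not> (\<not> st_coupled s \<and> st_alive s \<and> st_visits s < m)" using s by (auto simp: few_visits_def)
  then show ?thesis using False by (simp only: weight_def if_not_P) simp
qed

lemma nn_integral_weight_le:
  assumes "0 < m"
  shows "(\<integral>\<^sup>+s. weight m n s \<partial>coupled n) \<le> 1 + (\<integral>\<^sup>+x. ennreal (f x) \<partial>\<nu>) + ennreal (b / (1 - lam))"
  using weight_chain weight_init[OF assms] by (rule order_trans)

text \<open>Markov's inequality for the supermartingale \<open>weight m\<close>, which is at least \<open>\<Lambda>\<^sup>-\<^sup>m\<close> everywhere
  and at least \<open>\<alpha>\<^sup>k(\<alpha>\<Lambda>)\<^sup>-\<^sup>m\<close> on \<open>few_visits m\<close> at time \<open>k\<close>.\<close>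

lemma few_visits_bound:
  assumes m: "0 < m" "m < k" and Ef: "(\<integral>\<^sup>+x. ennreal (f x) \<partial>\<nu>) \<noteq> \<infinity>"
  shows "measure (coupled k) (few_visits m) \<le>
    ((alpha * Lam) ^ m * (1 + enn2real (\<integral>\<^sup>+x. ennreal (f x) \<partial>\<nu>) + b / (1 - lam)) - alpha ^ m) / (alpha ^ k - alpha ^ m)"
proof -
  interpret J: prob_space "coupled k" by (rule prob_space_coupled)
  define A where "A = 1 + enn2real (\<integral>\<^sup>+x. ennreal (f x) \<partial>\<nu>) + b / (1 - lam)"
  define c0 where "c0 = 1 / Lam ^ m"
  define c1 where "c1 = alpha ^ k / (alpha * Lam) ^ m"
  define g where "g = measure (coupled k) (few_visits m)"
  have ap: "0 < alpha" "0 < Lam" using alpha_gt1 Lam_ge1 by auto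
  have "alpha ^ m < alpha ^ k" using alpha_gt1 m by (intro power_strict_increasing) auto
  then have c01: "0 \<le> c0" "c0 < c1" unfolding c0_def c1_def using ap
    by (simp_all add: power_mult_distrib field_simps)
  have "ennreal c0 + ennreal (c1 - c0) * ennreal g
      = ennreal c0 + ennreal (c1 - c0) * emeasure (coupled k) (few_visits m)"
    by (simp add: J.emeasure_eq_measure g_def)
  also have "\<dots> = (\<integral>\<^sup>+s. ennreal c0 + ennreal (c1 - c0) * indicator (few_visits m) s \<partial>coupled k)"
    by (subst nn_integral_add) (auto simp: J.emeasure_space_1 nn_integral_cmult_indicator
        measurable_cong_sets[OF sets_coupled refl])
  also have "\<dots> \<le> (\<integral>\<^sup>+s. weight m k s \<partial>coupled k)"
    using weight_ge_few_visits m by (intro nn_integral_mono) (simp add: space_coupled c0_def c1_def)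
  also have "\<dots> \<le> 1 + (\<integral>\<^sup>+x. ennreal (f x) \<partial>\<nu>) + ennreal (b / (1 - lam))"
    by (rule nn_integral_weight_le[OF m(1)])
  also have "\<dots> = ennreal A"
    using Ef b lam unfolding A_def
    by (subst ennreal_1_plus_plus) (simp_all add: ennreal_enn2real_if)
  finally have "ennreal (c0 + (c1 - c0) * g) \<le> ennreal A"
    using c01 by (simp add: g_def ennreal_mult ennreal_plus)
  moreover have "0 \<le> A" unfolding A_def using b lam by simp
  ultimately have "c0 + (c1 - c0) * g \<le> A" by (simp add: ennreal_le_iff)
  then have "g \<le> (A - c0) / (c1 - c0)" using c01 by (simp add: field_simps)
  also have "(A - c0) / (c1 - c0) = ((alpha * Lam) ^ m * A - alpha ^ m) / (alpha ^ k - alpha ^ m)"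
    unfolding c0_def c1_def using ap \<open>alpha ^ m < alpha ^ k\<close>
    by (simp add: power_mult_distrib field_simps)
  finally show ?thesis unfolding g_def A_def .
qed

lemma dead_bound: "measure (coupled (Suc n)) dead_set \<le> (\<Sum>i\<le>n. measure (kstep P i \<nu>) (space M - R0) + measure \<pi> (space M - R0))"
proof -
  interpret Jn: prob_space "coupled (Suc n)" by (rule prob_space_coupled)
  have R0c: "space M - R0 \<in> sets M" by simp
  have Oi: "(\<integral>\<^sup>+s. escaped s \<partial>coupled i) \<le> ennreal (measure (kstep P i \<nu>) (space M - R0) + measure \<pi> (space M - R0))" for i
  proof -
    interpret Ji: prob_space "coupled i" by (rule prob_space_coupled)
    interpret ki: prob_space "kstep P i \<nu>" by (rule prob_space_kstep_P)
    interpret pp: prob_space \<pi> by (rule pi_prob)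
    let ?A = "st_x -` (space M - R0) \<inter> space state_space" and ?B = "chain_y -` (space M - R0) \<inter> space state_space"
    have Am: "?A \<in> sets state_space" and Bm: "?B \<in> sets state_space" by measurable
    have "(\<integral>\<^sup>+s. escaped s \<partial>coupled i) \<le> (\<integral>\<^sup>+s. indicator ?A s + indicator ?B s \<partial>coupled i)"
      by (rule nn_integral_mono) (auto simp: escaped_def space_coupled state_components split: split_indicator)
    also have "\<dots> = emeasure (coupled i) ?A + emeasure (coupled i) ?B"
    proof -
      have "?A \<in> sets (coupled i)" "?B \<in> sets (coupled i)" using Am Bm by simp_all
      then show ?thesis by (subst nn_integral_add) (auto intro!: borel_measurable_indicator)
    qed
    also have "\<dots> = emeasure (kstep P i \<nu>) (space M - R0) + emeasure \<pi> (space M - R0)"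
      using emeasure_chain_x[OF R0c, of i] emeasure_chain_y[OF R0c, of i] by simp
    also have "\<dots> = ennreal (measure (kstep P i \<nu>) (space M - R0) + measure \<pi> (space M - R0))"
      by (simp add: ki.emeasure_eq_measure pp.emeasure_eq_measure ennreal_plus)
    finally show ?thesis .
  qed
  have "(\<integral>\<^sup>+s. dead s \<partial>coupled (Suc n)) = (\<integral>\<^sup>+s. indicator dead_set s \<partial>coupled (Suc n))"
    by (rule nn_integral_cong) (auto simp: dead_def dead_set_def space_coupled split: split_indicator)
  then have "emeasure (coupled (Suc n)) dead_set = (\<integral>\<^sup>+s. dead s \<partial>coupled (Suc n))"
    by simp
  also have "\<dots> \<le> (\<Sum>i\<le>n. (\<integral>\<^sup>+s. escaped s \<partial>coupled i))" by (rule dead_chain)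
  also have "\<dots> \<le> (\<Sum>i\<le>n. ennreal (measure (kstep P i \<nu>) (space M - R0) + measure \<pi> (space M - R0)))"
    by (rule sum_mono) (rule Oi)
  also have "\<dots> = ennreal (\<Sum>i\<le>n. measure (kstep P i \<nu>) (space M - R0) + measure \<pi> (space M - R0))"
    by (rule sum_ennreal) simp
  finally show ?thesis by (simp add: Jn.emeasure_eq_measure ennreal_le_iff sum_nonneg)
qed

lemma nu_outside_R0: "measure \<nu> (space M - R0) = 0"
proof -
  interpret p: prob_space \<nu> by (rule nu_prob)
  have "measure \<nu> (space \<nu> - R0) = 1 - measure \<nu> R0"
    by (rule p.prob_compl) (simp add: nu_sets)
  then show ?thesis using nu_R0 by (simp add: sets_eq_imp_space_eq[OF nu_sets])
qed

theorem tv_bound: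
  assumes m: "0 < m" "m < k" and Ef: "(\<integral>\<^sup>+x. ennreal (f x) \<partial>\<nu>) \<noteq> \<infinity>"
  shows "tv_dist M (kstep P k \<nu>) \<pi> \<le> (1 - \<epsilon>) ^ m
     + ((alpha * Lam) ^ m * (1 + enn2real (\<integral>\<^sup>+x. ennreal (f x) \<partial>\<nu>) + b / (1 - lam)) - alpha ^ m) / (alpha ^ k - alpha ^ m)
     + real k * measure \<pi> (space M - R0)
     + (\<Sum>i=1..k. measure (kstep P i \<nu>) (space M - R0))"
proof -
  obtain n where k: "k = Suc n" using m by (cases k) auto
  define g where "g i = measure (kstep P i \<nu>) (space M - R0)" for i
  have g0: "g 0 = 0" unfolding g_def using nu_outside_R0 by simp
  have gnn: "0 \<le> g i" for i unfolding g_def by simp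
  have "(\<Sum>i\<le>n. g i + measure \<pi> (space M - R0)) = (\<Sum>i\<le>n. g i) + real k * measure \<pi> (space M - R0)"
    by (simp add: sum.distrib k)
  also have "(\<Sum>i\<le>n. g i) \<le> (\<Sum>i\<le>Suc n. g i)" using gnn by simp
  also have "(\<Sum>i\<le>Suc n. g i) = g 0 + (\<Sum>i=1..Suc n. g i)"
  proof -
    have "{..Suc n} = insert 0 {1..Suc n}" by auto
    then show ?thesis by simp
  qed
  finally have Dsum: "(\<Sum>i\<le>n. g i + measure \<pi> (space M - R0)) \<le> real k * measure \<pi> (space M - R0) + (\<Sum>i=1..k. g i)"
    using g0 k by simp
  have "tv_dist M (kstep P k \<nu>) \<pi> \<le> measure (coupled k) uncoupled" by (rule tv_le_uncoupled)
  also have "\<dots> \<le> measure (coupled k) (few_visits m) + measure (coupled k) (many_visits m) + measure (coupled k) dead_set" by (rule uncoupled_split)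
  also have "\<dots> \<le> ((alpha * Lam) ^ m * (1 + enn2real (\<integral>\<^sup>+x. ennreal (f x) \<partial>\<nu>) + b / (1 - lam)) - alpha ^ m) / (alpha ^ k - alpha ^ m)
       + (1 - \<epsilon>) ^ m + (real k * measure \<pi> (space M - R0) + (\<Sum>i=1..k. g i))"
  proof (intro add_mono)
    show "measure (coupled k) (few_visits m) \<le> ((alpha * Lam) ^ m * (1 + enn2real (\<integral>\<^sup>+x. ennreal (f x) \<partial>\<nu>) + b / (1 - lam)) - alpha ^ m) / (alpha ^ k - alpha ^ m)"
      by (rule few_visits_bound[OF m Ef])
    show "measure (coupled k) (many_visits m) \<le> (1 - \<epsilon>) ^ m" by (rule many_visits_bound[OF m(1)])
    show "measure (coupled k) dead_set \<le> real k * measure \<pi> (space M - R0) + (\<Sum>i=1..k. g i)"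
      using dead_bound[of n] Dsum unfolding k g_def by simp
  qed
  finally show ?thesis unfolding g_def by simp
qed

end

theorem mainTheorem1:
  fixes M :: "'a measure" and P :: "'a \<Rightarrow> 'a measure"
    and \<pi> \<nu> Q :: "'a measure" and R0 :: "'a set" and f :: "'a \<Rightarrow> real"
    and lam b d \<epsilon> r :: real and k m :: nat
  assumes P_kernel: "P \<in> M \<rightarrow>\<^sub>M prob_algebra M"
    and irred: "irreducible_kernel M P"
    and pi_prob: "prob_space \<pi>" and pi_sets: "sets \<pi> = sets M"
    and pi_stat: "\<pi> \<bind> P = \<pi>"
    and R0_meas: "R0 \<in> sets M"
    and f_meas: "f \<in> borel_measurable M" and f_nonneg: "\<forall>x\<in>space M. 0 \<le> f x"
    and lam: "0 < lam" "lam < 1" and b: "0 \<le> b"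
    and drift: "\<forall>x\<in>R0. (\<integral>\<^sup>+y. ennreal (f y) \<partial>(P x)) \<le> ennreal (lam * f x + b)"
    and C: "(\<exists>d0>0. R0 = {x\<in>space M. f x \<le> d0})
            \<or> (\<exists>Ps. length Ps \<ge> 1
                  \<and> (\<forall>K\<in>set Ps. K \<in> M \<rightarrow>\<^sub>M prob_algebra M \<and> reversible_kernel M \<pi> K)
                  \<and> (\<forall>x\<in>space M. P x = kcomp M Ps x)
                  \<and> (\<forall>x\<in>space M. {x} \<in> sets M)
                  \<and> (\<forall>x\<in>R0. (\<integral>\<^sup>+y. ennreal (f y) \<partial>(kcomp M (map (trunc_kernel M R0) Ps) x))
                              \<le> (\<integral>\<^sup>+y. ennreal (f y) \<partial>(P x))))"
    and d: "d > 2 * b / (1 - lam)"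
    and eps: "\<epsilon> > 0"
    and Q_prob: "prob_space Q" and Q_sets: "sets Q = sets M"
    and minor: "\<forall>x\<in>{x\<in>space M. f x \<le> d}. \<forall>A\<in>sets M. measure (P x) A \<ge> \<epsilon> * measure Q A"
    and nu_prob: "prob_space \<nu>" and nu_sets: "sets \<nu> = sets M"
    and nu_R0: "measure \<nu> R0 = 1"
    and r: "0 < r" "r < 1" and k: "k > 0" and rk: "real m = r * real k"
  shows "let \<alpha> = (1 + d) / (1 + 2 * b + lam * d);
             Lam = 1 + 2 * (lam * d + b);
             Ef = (\<integral>\<^sup>+x. ennreal (f x) \<partial>\<nu>)
         in Ef = \<infinity> \<or>
            tv_dist M (kstep P k \<nu>) \<pi>
              \<le> (1 - \<epsilon> * measure Q R0) ^ m
                 + ((\<alpha> * Lam) ^ m * (1 + enn2real Ef + b / (1 - lam)) - \<alpha> ^ m) / (\<alpha> ^ k - \<alpha> ^ m)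
                 + real k * measure \<pi> (space M - R0)
                 + (\<Sum>i=1..k. measure (kstep P i \<nu>) (space M - R0))"
proof -
  have R0_subset: "R0 \<subseteq> space M" using R0_meas sets.sets_into_space by auto
  have consequences: "\<forall>x\<in>R0. Inf (f ` R0) \<le> lam * f x + b"
      "(\<integral>\<^sup>+x\<in>R0. ennreal (f x) \<partial>\<pi>) \<le> ennreal (b / (1 - lam))"
    using drift_consequences[OF P_kernel pi_prob pi_sets pi_stat R0_meas f_meas f_nonneg lam b drift C]
    by auto
  have "R0 \<noteq> {}" using nu_R0 by auto
  moreover have "\<forall>x\<in>R0. 0 \<le> f x" using f_nonneg R0_subset by auto
  ultimately obtain x0 where x0: "x0 \<in> space M" "f x0 \<le> d"
    using exists_below_level[OF _ _ lam consequences(1) b d] R0_subset by blast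
  have eps_le_1: "\<epsilon> \<le> 1"
    using minorization_const_le_1[OF P_kernel Q_prob Q_sets x0(1)] minor x0 by simp
  interpret coupling M P \<pi> \<nu> Q R0 f lam b d \<epsilon>
    by (rule coupling.intro[OF P_kernel pi_prob pi_sets pi_stat R0_meas f_meas f_nonneg lam b drift d
          eps eps_le_1 Q_prob Q_sets minor nu_prob nu_sets nu_R0 consequences(2)])
  have "0 < r * real k" "r * real k < real k" using r k by simp_all
  then have m: "0 < m" "m < k" using rk by linarith+
  have "(1 - \<epsilon>) ^ m \<le> (1 - \<epsilon> * measure Q R0) ^ m"
    using eps eps_le_1 prob_space.prob_le_1[OF Q_prob]
    by (intro power_mono) (simp_all add: mult_left_le)
  then have "tv_dist M (kstep P k \<nu>) \<pi>
      \<le> (1 - \<epsilon> * measure Q R0) ^ m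
         + ((alpha * Lam) ^ m * (1 + enn2real (\<integral>\<^sup>+x. ennreal (f x) \<partial>\<nu>) + b / (1 - lam)) - alpha ^ m)
             / (alpha ^ k - alpha ^ m)
         + real k * measure \<pi> (space M - R0) + (\<Sum>i=1..k. measure (kstep P i \<nu>) (space M - R0))"
    if "(\<integral>\<^sup>+x. ennreal (f x) \<partial>\<nu>) \<noteq> \<infinity>"
    using tv_bound[OF m that] by linarith
  then show ?thesis unfolding Let_def alpha_def Lam_def by blast
qed

end
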